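(* Let $G=G(\{h_i,n_i\})$ be as in the context, with $n_i=h_i^{15}$ and $h_i\geq F(n_{i-1}h_{i-1}^2)$ for all $i\geq1$, where $F:\mathbb{N}\to\mathbb{N}$ is a suitable (sufficiently fast-growing) function depending only on $\rho$. Then for simple random walk on $G$: (1) for every integer $h\geq1$, $\mathbb{P}_0(\tau_h<\tau_0)=h^{-1}$; (2) for every $i\geq1$ and every vertex $v$ with $0\leq \mathrm{ht}(v)<h_i$, $\mathbb{E}_v(\tau_{h_i}\wedge\tau_0)\leq 2h_i^2$.
   Context: Construction of $G(\{h_i,n_i\})$: fix $\rho<1$; let $(h_i)_{i\geq0},(n_i)_{i\geq0}$ be increasing sequences of positive integers; let $(E_i)_{i\geq1}$ be $3$-regular graphs with $|E_i|=n_i$ whose transition matrices have all eigenvalues other than $1$ of absolute value at most $\rho$, and $v_i\in E_i$ arbitrary. $G$ consists of the half-line $\mathbb{N}=\{0,1,\ldots\}$ with edges between consecutive integers, together with each $E_i$ attached by a single edge between $v_i$ and the integer vertex $h_i$. The height $\mathrm{ht}(v)$ of a vertex is $h_i$ if $v\in E_i$ and $v$ itself if $v\in\mathbb{N}$. For a vertex $u$, $\tau_u=\min\{t\geq1:X_t=u\}$. *)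

theory Defs
  imports "HOL-Analysis.Analysis" "Jordan_Normal_Form.Char_Poly"
begin

definition trans_mat :: "nat \<Rightarrow> (nat \<Rightarrow> nat \<Rightarrow> bool) \<Rightarrow> real mat" where
  "trans_mat m R = mat m m (\<lambda>(x, y). if R x y then 1 / 3 else 0)"

text \<open>3-regular simple graph on m vertices whose transition matrix has all eigenvalues
other than (one copy of) the eigenvalue 1 of absolute value at most rho, eigenvalues
counted with algebraic multiplicity as roots of the characteristic polynomial.\<close>

definition cubic_expander :: "real \<Rightarrow> nat \<Rightarrow> (nat \<Rightarrow> nat \<Rightarrow> bool) \<Rightarrow> bool" where
  "cubic_expander \<rho> m R \<longleftrightarrow>
     (\<forall>x<m. \<forall>y<m. R x y \<longleftrightarrow> R y x) \<and>
     (\<forall>x<m. \<not> R x x) \<and>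
     (\<forall>x<m. card {y. y < m \<and> R x y} = 3) \<and>
     (\<exists>q. char_poly (trans_mat m R) = [:-1, 1:] * q \<and>
          (\<forall>z::complex. poly (map_poly complex_of_real q) z = 0 \<longrightarrow> cmod z \<le> \<rho>))"

text \<open>L k is the integer vertex k of the half-line; X i x is vertex x (x < n i) of E_i, i \<ge> 1.\<close>

datatype vert = L nat | X nat nat

definition is_vertex :: "(nat \<Rightarrow> nat) \<Rightarrow> vert \<Rightarrow> bool" where
  "is_vertex n v = (case v of L k \<Rightarrow> True | X i x \<Rightarrow> 1 \<le> i \<and> x < n i)"

definition adjG :: "(nat \<Rightarrow> nat) \<Rightarrow> (nat \<Rightarrow> nat) \<Rightarrow> (nat \<Rightarrow> nat \<Rightarrow> nat \<Rightarrow> bool) \<Rightarrow> (nat \<Rightarrow> nat)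
    \<Rightarrow> vert \<Rightarrow> vert \<Rightarrow> bool" where
  "adjG h n E vv u w = (case (u, w) of
      (L a, L b) \<Rightarrow> a = b + 1 \<or> b = a + 1
    | (X i x, X j y) \<Rightarrow> i = j \<and> 1 \<le> i \<and> x < n i \<and> y < n i \<and> E i x y
    | (X i x, L b) \<Rightarrow> 1 \<le> i \<and> x = vv i \<and> b = h i
    | (L a, X j y) \<Rightarrow> 1 \<le> j \<and> y = vv j \<and> a = h j)"

definition ht :: "(nat \<Rightarrow> nat) \<Rightarrow> vert \<Rightarrow> nat" where
  "ht h v = (case v of L k \<Rightarrow> k | X i x \<Rightarrow> h i)"

definition srw_prob :: "('v \<Rightarrow> 'v \<Rightarrow> bool) \<Rightarrow> 'v \<Rightarrow> 'v \<Rightarrow> real" where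
  "srw_prob adj u w = (if adj u w then 1 / real (card {y. adj u y}) else 0)"

fun is_walk :: "('v \<Rightarrow> 'v \<Rightarrow> bool) \<Rightarrow> 'v \<Rightarrow> 'v list \<Rightarrow> bool" where
  "is_walk adj u [] = True"
| "is_walk adj u (w # ws) = (adj u w \<and> is_walk adj w ws)"

text \<open>Probability that the walk started at u performs the steps X_1..X_t = ws.\<close>
fun walk_weight :: "('v \<Rightarrow> 'v \<Rightarrow> bool) \<Rightarrow> 'v \<Rightarrow> 'v list \<Rightarrow> real" where
  "walk_weight adj u [] = 1"
| "walk_weight adj u (w # ws) = srw_prob adj u w * walk_weight adj w ws"

text \<open>P_v(tau_a = t and tau_a < tau_b), with tau_u = min{t \<ge> 1 : X_t = u}.\<close>
definition first_hit_before :: "('v \<Rightarrow> 'v \<Rightarrow> bool) \<Rightarrow> 'v \<Rightarrow> 'v \<Rightarrow> 'v \<Rightarrow> nat \<Rightarrow> real" where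
  "first_hit_before adj v a b t =
     (if t = 0 then 0 else
      (\<Sum>ws\<in>{ws. length ws = t \<and> is_walk adj v ws \<and> last ws = a \<and>
                 a \<notin> set (butlast ws) \<and> b \<notin> set (butlast ws)}. walk_weight adj v ws))"

text \<open>P_v(tau_a < tau_b).\<close>
definition hit_before :: "('v \<Rightarrow> 'v \<Rightarrow> bool) \<Rightarrow> 'v \<Rightarrow> 'v \<Rightarrow> 'v \<Rightarrow> ennreal" where
  "hit_before adj v a b = (\<Sum>t. ennreal (first_hit_before adj v a b t))"

text \<open>P_v(min(tau_a, tau_b) = t).\<close>
definition exit_dist :: "('v \<Rightarrow> 'v \<Rightarrow> bool) \<Rightarrow> 'v \<Rightarrow> 'v \<Rightarrow> 'v \<Rightarrow> nat \<Rightarrow> real" where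
  "exit_dist adj v a b t =
     (if t = 0 then 0 else
      (\<Sum>ws\<in>{ws. length ws = t \<and> is_walk adj v ws \<and> (last ws = a \<or> last ws = b) \<and>
                 a \<notin> set (butlast ws) \<and> b \<notin> set (butlast ws)}. walk_weight adj v ws))"

text \<open>E_v(min(tau_a, tau_b)) in [0, \<infinity>]: sum of t P(min = t) plus \<infinity> times P(min = \<infinity>).\<close>
definition exp_exit :: "('v \<Rightarrow> 'v \<Rightarrow> bool) \<Rightarrow> 'v \<Rightarrow> 'v \<Rightarrow> 'v \<Rightarrow> ennreal" where
  "exp_exit adj v a b =
     (\<Sum>t. of_nat t * ennreal (exit_dist adj v a b t))
     + (\<infinity>::ennreal) * (1 - (\<Sum>t. ennreal (exit_dist adj v a b t)))"

end

theory Submission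
  imports Defs
begin

(* Both claims concern the simple random walk on G killed at two targets: L k (resp. L h_i)
   and L 0.  Walk probabilities are handled by first-step analysis on the explicit sums over
   walks in which they are defined.
   (2) The expected exit time is at most 1 + (mean of g over the non-target neighbours)
       for any g >= 0 with 1 + (mean of g over non-target neighbours) <= g off the targets.
       Below height H we take a (H - a) on the half-line plus, for every gadget E_j below H,
       a multiple of the Green's function of the segment [0, H] with pole at its hub; inside
       E_j we add an exit potential of size O(4 ^ n_j).  It exists because a spectral
       expander is connected (the eigenvalue 1 is simple, while a closed proper vertex set
       would make it a double root); it decreases geometrically in the graph distance to the
       attachment vertex.  With F x = 27 x 4^x the growth condition makes the gadget
       contributions negligible against h_i^2.
   (1) The same Lyapunov function shows that the walk is absorbed almost surely.  The height
       is harmonic away from L 0 (a gadget sits at the constant height of its hub), so ht / k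
       is the probability of reaching L k before L 0.
   The file develops, in order: connectivity of expanders; the exit potential of a connected
   cubic graph; first-step analysis of killed walks (exit times from Lyapunov functions,
   hitting probabilities from harmonic functions); the graph G with its harmonic and Lyapunov
   functions; finally the theorem. *)

section \<open>Spectral expanders are connected\<close>

lemma det_permute_rows_cols:
  fixes A :: "'a :: comm_ring_1 mat"
  assumes A: "A \<in> carrier_mat n n" and p: "p permutes {0..<n}"
  shows "det (mat n n (\<lambda>(i,j). A $$ (p i, p j))) = det A"
proof -
  define B where "B = mat n n (\<lambda>(i,j). A $$ (p i, j))"
  have B: "B \<in> carrier_mat n n" unfolding B_def by auto
  have dB: "det B = of_int (sign p) * det A" unfolding B_def by (rule det_permute_rows[OF A p])
  have pl: "p i < n" if "i < n" for i using p that by (simp add: permutes_in_image)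
  have eq: "mat n n (\<lambda>(i,j). transpose_mat B $$ (p i, j)) = transpose_mat (mat n n (\<lambda>(i,j). A $$ (p i, p j)))"
    by (rule eq_matI, insert B pl, auto simp: B_def)
  have sq: "of_int (sign p) * of_int (sign p) = (1::'a)"
  proof -
    have "of_int (sign p) \<in> {1::'a, -1}" by (rule signof_pm_one)
    then show ?thesis by (auto simp del: of_int_mult)
  qed
  have "det (transpose_mat (mat n n (\<lambda>(i,j). A $$ (p i, p j)))) = of_int (sign p) * det (transpose_mat B)"
    unfolding eq[symmetric] by (rule det_permute_rows[OF _ p], insert B, auto)
  also have "\<dots> = (of_int (sign p) * of_int (sign p)) * det A"
    using det_transpose[OF B] dB by (simp add: mult.assoc)
  finally show ?thesis using sq by (subst (asm) det_transpose, auto)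
qed

definition principal_block :: "'a mat \<Rightarrow> nat list \<Rightarrow> 'a mat" where
  "principal_block C us = mat (length us) (length us) (\<lambda>(i,j). C $$ (us ! i, us ! j))"

lemma sum_nth_distinct:
  assumes "distinct us"
  shows "(\<Sum>j<length us. f (us ! j)) = (\<Sum>y\<in>set us. f y)"
  using sum.reindex_bij_betw[OF bij_betw_nth[OF assms refl refl], of f] by (simp add: atLeast0LessThan)

text \<open>If a nonempty vertex set is closed under the edges of a 3-regular graph, the restriction
  of the transition matrix to it is stochastic, so 1 is a root of the characteristic polynomial
  of that block: the constant vector lies in the kernel of the evaluated block at 1.\<close>

lemma closed_block_char_poly_root:
  fixes R :: "nat \<Rightarrow> nat \<Rightarrow> bool"
  assumes deg: "\<forall>x<m. card {y. y < m \<and> R x y} = 3"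
    and U: "set us \<subseteq> {0..<m}" and cl: "\<forall>x\<in>set us. \<forall>y<m. R x y \<longrightarrow> y \<in> set us"
    and d: "distinct us" and ne: "us \<noteq> []"
  shows "poly (det (principal_block (char_poly_matrix (trans_mat m R)) us)) 1 = 0"
proof -
  let ?l = "length us"
  let ?M = "principal_block (char_poly_matrix (trans_mat m R)) us"
  define N where "N = map_mat (\<lambda>p. poly p 1) ?M"
  have usm: "us ! i < m" if "i < ?l" for i using U that nth_mem by fastforce
  have Nij: "N $$ (i,j) = (if i = j then 1 else 0) - (if R (us!i) (us!j) then 1/3 else 0)"
    if "i < ?l" "j < ?l" for i j
    using that usm[OF that(1)] usm[OF that(2)] nth_eq_iff_index_eq[OF d that]
    by (auto simp: N_def principal_block_def char_poly_matrix_def trans_mat_def)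
  have N: "N \<in> carrier_mat ?l ?l" unfolding N_def principal_block_def by auto
  define w where "w = vec ?l (\<lambda>_. 1::real)"
  have Nw: "N *\<^sub>v w = 0\<^sub>v ?l"
  proof (rule eq_vecI)
    fix i assume "i < dim_vec (0\<^sub>v ?l :: real vec)"
    hence i: "i < ?l" by simp
    let ?x = "us ! i"
    have "(N *\<^sub>v w) $ i = (\<Sum>j<?l. N $$ (i,j))"
      using N i by (simp add: w_def mult_mat_vec_def scalar_prod_def row_def atLeast0LessThan)
    also have "\<dots> = (\<Sum>j<?l. (if i = j then 1 else 0)) - (\<Sum>j<?l. (if R ?x (us!j) then 1/3 else 0))"
      using Nij i by (simp add: sum_subtractf)
    also have "(\<Sum>j<?l. (if i = j then 1 else (0::real))) = 1" using i by simp
    also have "(\<Sum>j<?l. (if R ?x (us!j) then 1/3 else (0::real))) = (\<Sum>y\<in>set us. (if R ?x y then 1/3 else 0))"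
      by (rule sum_nth_distinct[OF d])
    also have "\<dots> = (\<Sum>y\<in>{y\<in>set us. R ?x y}. 1/3)"
      by (rule sum.inter_filter[symmetric]) simp
    also have "{y\<in>set us. R ?x y} = {y. y < m \<and> R ?x y}" using cl i U by auto
    also have "(\<Sum>y\<in>{y. y < m \<and> R ?x y}. 1/3) = (1::real)" using deg usm[OF i] by auto
    finally show "(N *\<^sub>v w) $ i = 0\<^sub>v ?l $ i" using i by simp
  qed (insert N, simp add: w_def)
  have w0: "w \<noteq> 0\<^sub>v ?l"
  proof
    assume "w = 0\<^sub>v ?l"
    hence "w $ 0 = 0\<^sub>v ?l $ 0" by simp
    with ne show False by (simp add: w_def)
  qed
  have "det N = 0"
    unfolding det_0_iff_vec_prod_zero[OF N] using Nw w0 by (intro exI[of _ w]) (auto simp: w_def)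
  moreover have "det N = poly (det ?M) 1"
    unfolding N_def by (rule comm_ring_hom.hom_det[OF poly_hom.comm_ring_hom_axioms])
  ultimately show ?thesis by simp
qed

lemma list_permutes:
  assumes d: "distinct zs" and set: "set zs = {0..<m}"
  shows "(\<lambda>i. if i < m then zs ! i else i) permutes {0..<m}"
proof -
  have "length zs = m" using distinct_card[OF d] set by simp
  hence "bij_betw ((!) zs) {0..<m} {0..<m}"
    using bij_betw_nth[OF d _ set[symmetric]] by (simp add: atLeast0LessThan)
  hence "bij_betw (\<lambda>i. if i < m then zs ! i else i) {0..<m} {0..<m}"
    by (rule bij_betw_cong[THEN iffD1, rotated]) simp
  then show ?thesis by (rule bij_imp_permutes) simp
qed

text \<open>If no edge joins S to its complement T (in either direction), ordering the vertices as
  S followed by T puts the characteristic matrix into block-diagonal form, so the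
  characteristic polynomial factors into the two principal blocks.\<close>

lemma char_poly_split_disconnected:
  fixes R :: "nat \<Rightarrow> nat \<Rightarrow> bool"
  assumes S: "S \<subseteq> {0..<m}" and T: "T = {0..<m} - S"
    and noST: "\<And>x y. x \<in> S \<Longrightarrow> y \<in> T \<Longrightarrow> \<not> R x y \<and> \<not> R y x"
  obtains xs ys where "distinct xs" "set xs = S" "distinct ys" "set ys = T"
    "char_poly (trans_mat m R) =
       det (principal_block (char_poly_matrix (trans_mat m R)) xs) *
       det (principal_block (char_poly_matrix (trans_mat m R)) ys)"
proof -
  have fS: "finite S" using S finite_subset by blast
  define xs where "xs = sorted_list_of_set S"
  define ys where "ys = sorted_list_of_set T"
  have xs: "distinct xs" "set xs = S" using fS by (auto simp: xs_def)
  have ys: "distinct ys" "set ys = T" by (auto simp: ys_def T)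
  define k where "k = length xs"
  define l where "l = length ys"
  have disj: "S \<inter> T = {}" and un: "S \<union> T = {0..<m}" using S T by auto
  have klm: "k + l = m"
  proof -
    have "k = card S" "l = card T" using distinct_card xs ys k_def l_def by metis+
    moreover have "card S + card T = m" using card_Un_disjoint[OF fS _ disj] un T by simp
    ultimately show ?thesis by simp
  qed
  define zs where "zs = xs @ ys"
  have "distinct zs" "set zs = {0..<m}"
    using xs ys disj un by (auto simp: zs_def)
  define p where "p = (\<lambda>i. if i < m then zs ! i else i)"
  have p: "p permutes {0..<m}" unfolding p_def by (rule list_permutes) fact+
  define C where "C = char_poly_matrix (trans_mat m R)"
  have C: "C \<in> carrier_mat m m" unfolding C_def trans_mat_def by simp
  define M1 where "M1 = principal_block C xs"
  define M2 where "M2 = principal_block C ys"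
  have Cz: "C $$ (x, y) = 0 \<and> C $$ (y, x) = 0" if "x \<in> S" "y \<in> T" for x y
  proof -
    have "x < m" "y < m" "x \<noteq> y" using that S disj T by auto
    then show ?thesis using noST[OF that] by (simp add: C_def char_poly_matrix_def trans_mat_def)
  qed
  have zsn: "zs ! i = (if i < k then xs ! i else ys ! (i - k))" for i
    by (simp add: zs_def k_def nth_append)
  have xsS: "xs ! i \<in> S" if "i < k" for i using that xs(2) k_def nth_mem by blast
  have ysT: "ys ! i \<in> T" if "i < l" for i using that ys(2) l_def nth_mem by blast
  have D: "mat m m (\<lambda>(i,j). C $$ (p i, p j)) = four_block_mat M1 (0\<^sub>m k l) (0\<^sub>m l k) M2"
    by (rule eq_matI) (insert klm xsS ysT Cz, auto simp: M1_def M2_def principal_block_def p_def zsn k_def l_def)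
  have "char_poly (trans_mat m R) = det C" unfolding C_def char_poly_def ..
  also have "\<dots> = det (mat m m (\<lambda>(i,j). C $$ (p i, p j)))" by (rule det_permute_rows_cols[OF C p, symmetric])
  also have "\<dots> = det M1 * det M2" unfolding D
    by (rule det_four_block_mat_lower_left_zero, auto simp: M1_def M2_def principal_block_def k_def l_def)
  finally show ?thesis using that xs ys unfolding M1_def M2_def C_def by blast
qed

text \<open>Otherwise both it and its complement give a factor vanishing at 1, so 1 is a
  double root of the characteristic polynomial, contradicting the spectral gap.\<close>

lemma expander_closed_subset:
  assumes ce: "cubic_expander \<rho> m R" and rho: "\<rho> < 1"
    and S: "S \<subseteq> {0..<m}" "S \<noteq> {}" and cl: "\<forall>x\<in>S. \<forall>y<m. R x y \<longrightarrow> y \<in> S"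
  shows "S = {0..<m}"
proof (rule ccontr)
  assume neq: "S \<noteq> {0..<m}"
  define T where "T = {0..<m} - S"
  from ce have sym: "\<forall>x<m. \<forall>y<m. R x y \<longleftrightarrow> R y x" and deg: "\<forall>x<m. card {y. y < m \<and> R x y} = 3"
    unfolding cubic_expander_def by auto
  from ce obtain q where cp: "char_poly (trans_mat m R) = [:-1, 1:] * q"
    and roots: "\<forall>z::complex. poly (map_poly complex_of_real q) z = 0 \<longrightarrow> cmod z \<le> \<rho>"
    unfolding cubic_expander_def by auto
  have noST: "\<not> R x y \<and> \<not> R y x" if "x \<in> S" "y \<in> T" for x y
    using that cl sym S unfolding T_def by auto
  have clT: "\<forall>x\<in>T. \<forall>y<m. R x y \<longrightarrow> y \<in> T"
  proof (intro ballI allI impI)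
    fix x y assume "x \<in> T" "y < m" "R x y"
    then show "y \<in> T" using noST[of y x] unfolding T_def by auto
  qed
  obtain xs ys where xs: "distinct xs" "set xs = S" and ys: "distinct ys" "set ys = T"
    and split: "char_poly (trans_mat m R) =
       det (principal_block (char_poly_matrix (trans_mat m R)) xs) *
       det (principal_block (char_poly_matrix (trans_mat m R)) ys)"
    using char_poly_split_disconnected[where R = R, OF S(1) T_def noST] by blast
  have "poly (det (principal_block (char_poly_matrix (trans_mat m R)) xs)) 1 = 0"
    by (rule closed_block_char_poly_root[OF deg]) (use xs S cl in auto)
  then obtain s1 where s1: "det (principal_block (char_poly_matrix (trans_mat m R)) xs) = [:-1,1:] * s1"
    unfolding poly_eq_0_iff_dvd by (auto elim: dvdE)
  have "poly (det (principal_block (char_poly_matrix (trans_mat m R)) ys)) 1 = 0"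
    by (rule closed_block_char_poly_root[OF deg]) (use ys neq S clT in \<open>auto simp: T_def\<close>)
  then obtain s2 where s2: "det (principal_block (char_poly_matrix (trans_mat m R)) ys) = [:-1,1:] * s2"
    unfolding poly_eq_0_iff_dvd by (auto elim: dvdE)
  define P where "P = [:-1::real, 1:]"
  have P0: "P \<noteq> 0" unfolding P_def by simp
  have "P * q = (P * s1) * (P * s2)" using cp split s1 s2 unfolding P_def by metis
  also have "\<dots> = P * (s1 * (P * s2))" by (simp only: mult.assoc)
  finally have "q = s1 * (P * s2)" using P0 by simp
  hence "poly q 1 = 0" by (simp add: P_def)
  hence "poly (map_poly complex_of_real q) 1 = 0" by (simp add: of_real_hom.poly_map_poly_1)
  with roots have "cmod 1 \<le> \<rho>" by blast
  with rho show False by simp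
qed

section \<open>An exit potential on a connected cubic graph\<close>

fun reach :: "(nat \<Rightarrow> nat \<Rightarrow> bool) \<Rightarrow> nat \<Rightarrow> nat \<Rightarrow> nat \<Rightarrow> nat set" where
  "reach R m v 0 = {v}"
| "reach R m v (Suc k) = reach R m v k \<union> {x. x < m \<and> (\<exists>y\<in>reach R m v k. R y x)}"

lemma reach_mono: "k \<le> l \<Longrightarrow> reach R m v k \<subseteq> reach R m v l"
  by (induction l) (auto simp: le_Suc_eq)

lemma reach_subset: "v < m \<Longrightarrow> reach R m v k \<subseteq> {0..<m}"
  by (induction k) auto

lemma reach_stable: "reach R m v (Suc k) = reach R m v k \<Longrightarrow> reach R m v (k + j) = reach R m v k"
  by (induction j) auto

text \<open>Every vertex of a cubic expander is reachable from every other one, since the set of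
  vertices reachable from v is closed under edges.\<close>

lemma expander_reach:
  assumes ce: "cubic_expander \<rho> m R" and rho: "\<rho> < 1" and v: "v < m" and x: "x < m"
  shows "\<exists>k. x \<in> reach R m v k"
proof -
  define S where "S = {x. \<exists>k. x \<in> reach R m v k}"
  have "S = {0..<m}"
  proof (rule expander_closed_subset[OF ce rho])
    show "S \<subseteq> {0..<m}" using reach_subset[OF v] unfolding S_def by blast
    show "S \<noteq> {}" unfolding S_def using reach.simps(1) by blast
    show "\<forall>x\<in>S. \<forall>y<m. R x y \<longrightarrow> y \<in> S"
    proof (intro ballI allI impI)
      fix x y assume "x \<in> S" "y < m" "R x y"
      then obtain k where "x \<in> reach R m v k" unfolding S_def by blast
      hence "y \<in> reach R m v (Suc k)" using \<open>y < m\<close> \<open>R x y\<close> by auto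
      thus "y \<in> S" unfolding S_def by blast
    qed
  qed
  then show ?thesis using x unfolding S_def by auto
qed

text \<open>The balls around v grow strictly until they stop growing for good, and they live in
  {0..<m}; hence a vertex first reached at radius k has k < m.\<close>

lemma reach_first_radius:
  assumes v: "v < m" and x: "x \<in> reach R m v k" and first: "\<And>j. j < k \<Longrightarrow> x \<notin> reach R m v j"
  shows "k < m"
proof -
  let ?B = "reach R m v"
  have grow: "?B j \<subset> ?B (Suc j)" if "j < k" for j
  proof -
    have "?B (Suc j) \<noteq> ?B j"
    proof
      assume "?B (Suc j) = ?B j"
      hence "?B (j + (k - j)) = ?B j" by (rule reach_stable)
      thus False using x first[OF that] that by simp
    qed
    then show ?thesis using reach_mono[of j "Suc j"] by auto
  qed
  have fin: "finite (?B j)" for j using reach_subset[OF v] finite_subset by blast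
  have "j + 1 \<le> card (?B j)" if "j \<le> k" for j
    using that
  proof (induction j)
    case (Suc j)
    have "card (?B j) < card (?B (Suc j))"
      using psubset_card_mono[OF fin grow[of j]] Suc.prems by simp
    then show ?case using Suc by simp
  qed simp
  moreover have "card (?B k) \<le> m"
    using card_mono[OF _ reach_subset[OF v]] by fastforce
  ultimately show ?thesis by fastforce
qed

lemma graph_distance:
  assumes sym: "\<forall>x<m. \<forall>y<m. R x y \<longleftrightarrow> R y x" and v: "v < m"
    and conn: "\<And>x. x < m \<Longrightarrow> \<exists>k. x \<in> reach R m v k"
  obtains d :: "nat \<Rightarrow> nat" where "d v = 0" "\<And>x. x < m \<Longrightarrow> d x < m"
    "\<And>x y. x < m \<Longrightarrow> y < m \<Longrightarrow> R x y \<Longrightarrow> d y \<le> d x + 1"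
    "\<And>x. x < m \<Longrightarrow> x \<noteq> v \<Longrightarrow> \<exists>y<m. R x y \<and> d y + 1 \<le> d x"
proof -
  let ?B = "reach R m v"
  define d where "d x = (LEAST k. x \<in> ?B k)" for x
  have dB: "x \<in> ?B (d x)" if "x < m" for x
    unfolding d_def using conn[OF that] by (rule LeastI_ex)
  have dle: "d x \<le> k" if "x \<in> ?B k" for x k unfolding d_def using that by (rule Least_le)
  have d0: "d v = 0" using dle[of v 0] by simp
  have dnb: "d y \<le> d x + 1" if "x < m" "y < m" "R x y" for x y
    using dle[of y "Suc (d x)"] dB[OF that(1)] that by auto
  have dpred: "\<exists>y<m. R x y \<and> d y + 1 \<le> d x" if x: "x < m" "x \<noteq> v" for x
  proof -
    have "d x \<noteq> 0" using dB[OF x(1)] x by (intro notI) auto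
    then obtain k where k: "d x = Suc k" by (cases "d x") auto
    have "x \<notin> ?B k" using dle[of x k] k by auto
    moreover have "x \<in> ?B (Suc k)" using dB[OF x(1)] k by simp
    ultimately obtain y where y: "y \<in> ?B k" "R y x" by auto
    have ym: "y < m" using reach_subset[OF v, of R k] y(1) by auto
    have "R x y" using sym y(2) ym x(1) by auto
    moreover have "d y \<le> k" using dle y(1) by auto
    ultimately show ?thesis using ym k by auto
  qed
  have dlt: "d x < m" if x: "x < m" for x
    by (rule reach_first_radius[OF v dB[OF x]]) (use dle in fastforce)
  from that[OF d0 dlt dnb dpred] show ?thesis .
qed

text \<open>An exit potential for a gadget attached at v: a bounded nonnegative function that is a
  strict supersolution of the expected exit-time equation.  Inside the gadget a vertex has its
  3 gadget neighbours; the attachment vertex v has in addition the hub, hence weight 1/4.\<close>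

definition exit_potential :: "nat \<Rightarrow> (nat \<Rightarrow> nat \<Rightarrow> bool) \<Rightarrow> nat \<Rightarrow> (nat \<Rightarrow> real) \<Rightarrow> bool" where
  "exit_potential m R v phi \<longleftrightarrow>
     (\<forall>x<m. 0 \<le> phi x \<and> phi x \<le> 4 + 8 * 4 ^ m) \<and>
     (\<forall>x<m. x \<noteq> v \<longrightarrow> 1 + (\<Sum>y\<in>{y. y < m \<and> R x y}. phi y) / 3 \<le> phi x) \<and>
     1 + (\<Sum>y\<in>{y. y < m \<and> R v y}. phi y) / 4 \<le> phi v"

locale rooted_cubic_graph =
  fixes m :: nat and R :: "nat \<Rightarrow> nat \<Rightarrow> bool" and v :: nat and d :: "nat \<Rightarrow> nat"
  assumes deg: "\<forall>x<m. card {y. y < m \<and> R x y} = 3" and root: "v < m"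
    and d_root: "d v = 0" and d_less: "\<And>x. x < m \<Longrightarrow> d x < m"
    and d_edge: "\<And>x y. x < m \<Longrightarrow> y < m \<Longrightarrow> R x y \<Longrightarrow> d y \<le> d x + 1"
    and d_parent: "\<And>x. x < m \<Longrightarrow> x \<noteq> v \<Longrightarrow> \<exists>y<m. R x y \<and> d y + 1 \<le> d x"
begin

definition weight :: "nat \<Rightarrow> real" where
  "weight x = 4 ^ (m - d x)"

lemma weight_pos: "0 < weight x"
  unfolding weight_def by simp

lemma weight_ge: "x < m \<Longrightarrow> 4 \<le> weight x"
  using power_increasing[of 1 "m - d x" "4::real"] d_less[of x] unfolding weight_def by simp

lemma weight_le: "weight x \<le> 4 ^ m"
  unfolding weight_def by (rule power_increasing) auto

lemma weight_root: "weight v = 4 ^ m"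
  unfolding weight_def using d_root by simp

lemma weight_edge: "x < m \<Longrightarrow> y < m \<Longrightarrow> R x y \<Longrightarrow> weight x \<le> 4 * weight y"
  using power_increasing[of "m - d x" "Suc (m - d y)" "4::real"] d_edge[of x y]
  unfolding weight_def by simp

lemma weight_parent: "x < m \<Longrightarrow> d y + 1 \<le> d x \<Longrightarrow> 4 * weight x \<le> weight y"
  using power_increasing[of "Suc (m - d x)" "m - d y" "4::real"] d_less[of x]
  unfolding weight_def by simp

definition potential :: "nat \<Rightarrow> real" where
  "potential x = 4 + 8 * 4 ^ m - 2 * weight x"

text \<open>Away from the root one neighbour is closer to it, which lowers the average by a factor-4
  step, while the other two neighbours cost at most a factor 4 in the other direction.\<close>

lemma potential_super:
  assumes x: "x < m" "x \<noteq> v"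
  shows "1 + (\<Sum>y\<in>{y. y < m \<and> R x y}. potential y) / 3 \<le> potential x"
proof -
  let ?Y = "{y. y < m \<and> R x y}"
  obtain y0 where y0: "y0 < m" "R x y0" "d y0 + 1 \<le> d x" using d_parent[OF x] by blast
  have y0Y: "y0 \<in> ?Y" using y0 by simp
  have "(\<Sum>y\<in>?Y. potential y) = potential y0 + (\<Sum>y\<in>?Y - {y0}. potential y)"
    using sum.remove[OF _ y0Y] by simp
  also have "potential y0 \<le> 4 + 8 * 4 ^ m - 8 * weight x"
    using weight_parent[OF x(1) y0(3)] unfolding potential_def by simp
  also have "(\<Sum>y\<in>?Y - {y0}. potential y) \<le> (\<Sum>y\<in>?Y - {y0}. 4 + 8 * 4 ^ m - weight x / 2)"
    by (rule sum_mono) (use weight_edge[OF x(1)] in \<open>auto simp: potential_def\<close>)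
  also have "\<dots> = 2 * (4 + 8 * 4 ^ m - weight x / 2)" using deg x(1) y0Y by simp
  finally show ?thesis using weight_ge[OF x(1)] unfolding potential_def by simp
qed

text \<open>At the root all three neighbours have weight at least 4^m / 4; with the fourth (external)
  neighbour counted in the average, the potential is still a supersolution.\<close>

lemma potential_super_root:
  "1 + (\<Sum>y\<in>{y. y < m \<and> R v y}. potential y) / 4 \<le> potential v"
proof -
  let ?Y = "{y. y < m \<and> R v y}"
  have "(\<Sum>y\<in>?Y. potential y) \<le> (\<Sum>y\<in>?Y. 4 + 8 * 4 ^ m - 2 * (4 ^ m / 4))"
  proof (rule sum_mono)
    fix y assume "y \<in> ?Y"
    hence "weight v \<le> 4 * weight y" using weight_edge[of v y] root by simp
    thus "potential y \<le> 4 + 8 * 4 ^ m - 2 * (4 ^ m / 4)" unfolding potential_def using weight_root by simp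
  qed
  also have "\<dots> = 3 * (4 + 8 * 4 ^ m - 2 * (4 ^ m / 4))" using deg root by simp
  finally have S: "(\<Sum>y\<in>?Y. potential y) \<le> 3 * (4 + 8 * 4 ^ m - 2 * (4 ^ m / 4))" .
  have key: "s \<le> 3 * (4 + 8 * X - 2 * (X / 4)) \<Longrightarrow> 0 \<le> X \<Longrightarrow> 1 + s / 4 \<le> 4 + 8 * X - 2 * X"
    for s X :: real by (simp add: field_simps)
  show ?thesis using key[OF S] unfolding potential_def weight_root by simp
qed

lemma exit_potential: "exit_potential m R v potential"
proof -
  have "0 \<le> potential x \<and> potential x \<le> 4 + 8 * 4 ^ m" for x
    using weight_le[of x] weight_pos[of x] unfolding potential_def by simp
  moreover have "\<forall>x<m. x \<noteq> v \<longrightarrow> 1 + (\<Sum>y\<in>{y. y < m \<and> R x y}. potential y) / 3 \<le> potential x"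
    using potential_super by simp
  ultimately show ?thesis unfolding exit_potential_def using potential_super_root by simp
qed

end

lemma expander_exit_potential:
  assumes ce: "cubic_expander \<rho> m R" and rho: "\<rho> < 1" and v: "v < m"
  shows "\<exists>phi. exit_potential m R v phi"
proof -
  have sym: "\<forall>x<m. \<forall>y<m. R x y \<longleftrightarrow> R y x" and deg: "\<forall>x<m. card {y. y < m \<and> R x y} = 3"
    using ce unfolding cubic_expander_def by auto
  obtain d where "d v = 0" "\<And>x. x < m \<Longrightarrow> d x < m"
    "\<And>x y. x < m \<Longrightarrow> y < m \<Longrightarrow> R x y \<Longrightarrow> d y \<le> d x + 1"
    "\<And>x. x < m \<Longrightarrow> x \<noteq> v \<Longrightarrow> \<exists>y<m. R x y \<and> d y + 1 \<le> d x"
    using graph_distance[OF sym v expander_reach[OF ce rho v]] by blast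
  then interpret rooted_cubic_graph m R v d
    using deg v by unfold_locales
  show ?thesis using exit_potential by blast
qed

section \<open>First-step analysis of a random walk killed at two targets\<close>

text \<open>Throughout, adj is a locally finite graph, a and b are the two targets, and R is a set
  of vertices closed under steps of the walk that do not hit a target.\<close>

lemma srw_prob_nonneg: "0 \<le> srw_prob adj v w"
  by (auto simp: srw_prob_def)

lemma walk_weight_nonneg: "0 \<le> walk_weight adj v ws"
  by (induction ws arbitrary: v) (auto simp: srw_prob_def)

lemma srw_sum_one:
  assumes "finite {w. adj v w}" "{w. adj v w} \<noteq> {}"
  shows "(\<Sum>w\<in>{w. adj v w}. srw_prob adj v w) = 1"
  using assms by (simp add: srw_prob_def)

lemma srw_sum:
  "(\<Sum>w\<in>{w. adj v w}. srw_prob adj v w * F w) = (\<Sum>w\<in>{w. adj v w}. F w) / real (card {w. adj v w})"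
  by (simp add: srw_prob_def sum_divide_distrib)

lemma walks_finite:
  assumes fin: "\<And>u. finite {w. adj u w}"
  shows "finite {ws. length ws = t \<and> is_walk adj v ws}"
proof (induction t arbitrary: v)
  case (Suc t)
  have "{ws. length ws = Suc t \<and> is_walk adj v ws} \<subseteq>
        (\<lambda>(w,ws). w # ws) ` (SIGMA w:{w. adj v w}. {ws. length ws = t \<and> is_walk adj w ws})"
  proof
    fix ws assume "ws \<in> {ws. length ws = Suc t \<and> is_walk adj v ws}"
    then obtain w ws' where "ws = w # ws'" "length ws' = t" "adj v w" "is_walk adj w ws'"
      by (cases ws) auto
    thus "ws \<in> (\<lambda>(w,ws). w # ws) ` (SIGMA w:{w. adj v w}. {ws. length ws = t \<and> is_walk adj w ws})"
      by force
  qed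
  moreover have "finite ((\<lambda>(w,ws). w # ws) ` (SIGMA w:{w. adj v w}. {ws. length ws = t \<and> is_walk adj w ws}))"
    using fin Suc by auto
  ultimately show ?case by (rule finite_subset)
qed simp

lemma walk_decomp:
  assumes fin: "\<And>u. finite {w. adj u w}"
  shows "(\<Sum>ws\<in>{ws. length ws = Suc t \<and> is_walk adj v ws \<and> \<Phi> ws}. walk_weight adj v ws) =
         (\<Sum>w\<in>{w. adj v w}. srw_prob adj v w *
            (\<Sum>ws\<in>{ws. length ws = t \<and> is_walk adj w ws \<and> \<Phi> (w # ws)}. walk_weight adj w ws))"
proof -
  let ?B = "\<lambda>w. {ws. length ws = t \<and> is_walk adj w ws \<and> \<Phi> (w # ws)}"
  have eq: "{ws. length ws = Suc t \<and> is_walk adj v ws \<and> \<Phi> ws} = (\<lambda>(w,ws). w # ws) ` (SIGMA w:{w. adj v w}. ?B w)"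
  proof
    show "{ws. length ws = Suc t \<and> is_walk adj v ws \<and> \<Phi> ws} \<subseteq> (\<lambda>(w,ws). w # ws) ` (SIGMA w:{w. adj v w}. ?B w)"
    proof
      fix ws assume "ws \<in> {ws. length ws = Suc t \<and> is_walk adj v ws \<and> \<Phi> ws}"
      then obtain w ws' where "ws = w # ws'" "length ws' = t" "adj v w" "is_walk adj w ws'" "\<Phi> (w # ws')"
        by (cases ws) auto
      thus "ws \<in> (\<lambda>(w,ws). w # ws) ` (SIGMA w:{w. adj v w}. ?B w)" by force
    qed
  qed auto
  have inj: "inj_on (\<lambda>(w,ws). w # ws) (SIGMA w:{w. adj v w}. ?B w)"
    by (auto simp: inj_on_def)
  have finB: "finite (?B w)" for w
    by (rule finite_subset[OF _ walks_finite[OF fin, where t=t and v=w]]) auto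
  have "(\<Sum>ws\<in>{ws. length ws = Suc t \<and> is_walk adj v ws \<and> \<Phi> ws}. walk_weight adj v ws)
        = (\<Sum>(w,ws)\<in>(SIGMA w:{w. adj v w}. ?B w). walk_weight adj v (w # ws))"
    unfolding eq sum.reindex[OF inj] by (rule sum.cong) auto
  also have "\<dots> = (\<Sum>w\<in>{w. adj v w}. \<Sum>ws\<in>?B w. walk_weight adj v (w # ws))"
    by (rule sum.Sigma[symmetric], rule fin, rule ballI, rule finB)
  also have "\<dots> = (\<Sum>w\<in>{w. adj v w}. srw_prob adj v w * (\<Sum>ws\<in>?B w. walk_weight adj w ws))"
    by (simp add: sum_distrib_left)
  finally show ?thesis .
qed

text \<open>Probability that the walk from v avoids both targets strictly before time t and its
  position at time t satisfies P.  Both the first-hitting and the exit distribution are of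
  this form.\<close>

definition stopped_mass :: "('v \<Rightarrow> 'v \<Rightarrow> bool) \<Rightarrow> 'v \<Rightarrow> 'v \<Rightarrow> 'v \<Rightarrow> ('v \<Rightarrow> bool) \<Rightarrow> nat \<Rightarrow> real" where
  "stopped_mass adj v a b P t =
     (\<Sum>ws\<in>{ws. length ws = t \<and> is_walk adj v ws \<and> P (last ws) \<and>
               a \<notin> set (butlast ws) \<and> b \<notin> set (butlast ws)}. walk_weight adj v ws)"

lemma first_hit_stopped_mass:
  "first_hit_before adj v a b (Suc t) = stopped_mass adj v a b (\<lambda>x. x = a) (Suc t)"
  by (simp add: first_hit_before_def stopped_mass_def)

lemma exit_dist_stopped_mass:
  "exit_dist adj v a b (Suc t) = stopped_mass adj v a b (\<lambda>x. x = a \<or> x = b) (Suc t)"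
  by (simp add: exit_dist_def stopped_mass_def)

lemma stopped_mass_one:
  assumes fin: "\<And>u. finite {w. adj u w}"
  shows "stopped_mass adj v a b P (Suc 0) = (\<Sum>w\<in>{w. adj v w}. srw_prob adj v w * (if P w then 1 else 0))"
  unfolding stopped_mass_def using walk_decomp[OF fin, where t=0 and v=v]
  by (simp cong: sum.cong) (rule sum.cong, auto)

lemma stopped_mass_step:
  assumes fin: "\<And>u. finite {w. adj u w}"
  shows "stopped_mass adj v a b P (Suc (Suc t)) =
     (\<Sum>w\<in>{w. adj v w \<and> w \<noteq> a \<and> w \<noteq> b}. srw_prob adj v w * stopped_mass adj w a b P (Suc t))"
proof -
  have cons: "{ws. length ws = Suc t \<and> is_walk adj w ws \<and> P (last (w # ws)) \<and>
                   a \<notin> set (butlast (w # ws)) \<and> b \<notin> set (butlast (w # ws))} =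
     (if w \<noteq> a \<and> w \<noteq> b then {ws. length ws = Suc t \<and> is_walk adj w ws \<and> P (last ws) \<and>
                   a \<notin> set (butlast ws) \<and> b \<notin> set (butlast ws)} else {})" for w
    by auto
  have cons_mass: "(\<Sum>ws\<in>{ws. length ws = Suc t \<and> is_walk adj w ws \<and> P (last (w # ws)) \<and>
                   a \<notin> set (butlast (w # ws)) \<and> b \<notin> set (butlast (w # ws))}. walk_weight adj w ws) =
     (if w \<noteq> a \<and> w \<noteq> b then stopped_mass adj w a b P (Suc t) else 0)" for w
    unfolding cons by (simp add: stopped_mass_def)
  have "stopped_mass adj v a b P (Suc (Suc t)) =
     (\<Sum>w\<in>{w. adj v w}. srw_prob adj v w * (if w \<noteq> a \<and> w \<noteq> b then stopped_mass adj w a b P (Suc t) else 0))"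
    unfolding stopped_mass_def[of adj v a b P "Suc (Suc t)"] walk_decomp[OF fin, where t = "Suc t"] cons_mass ..
  also have "\<dots> = (\<Sum>w\<in>{w. adj v w \<and> w \<noteq> a \<and> w \<noteq> b}. srw_prob adj v w * stopped_mass adj w a b P (Suc t))"
    using fin[of v] by (simp add: if_distrib sum.inter_filter[symmetric] cong: if_cong)
  finally show ?thesis .
qed

lemma first_hit_one:
  assumes fin: "\<And>u. finite {w. adj u w}"
  shows "first_hit_before adj v a b (Suc 0) = srw_prob adj v a"
  unfolding first_hit_stopped_mass stopped_mass_one[OF fin]
  using fin[of v] by (auto simp: srw_prob_def if_distrib sum.delta cong: if_cong)

lemma first_hit_step:
  assumes fin: "\<And>u. finite {w. adj u w}"
  shows "first_hit_before adj v a b (Suc (Suc t)) =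
     (\<Sum>w\<in>{w. adj v w \<and> w \<noteq> a \<and> w \<noteq> b}. srw_prob adj v w * first_hit_before adj w a b (Suc t))"
  unfolding first_hit_stopped_mass by (rule stopped_mass_step[OF fin])

lemma exit_dist_step:
  assumes fin: "\<And>u. finite {w. adj u w}"
  shows "exit_dist adj v a b (Suc (Suc t)) =
     (\<Sum>w\<in>{w. adj v w \<and> w \<noteq> a \<and> w \<noteq> b}. srw_prob adj v w * exit_dist adj w a b (Suc t))"
  unfolding exit_dist_stopped_mass by (rule stopped_mass_step[OF fin])

lemma exit_dist_nonneg: "0 \<le> exit_dist adj v a b t"
  unfolding exit_dist_def by (auto intro!: sum_nonneg walk_weight_nonneg)

lemma first_hit_nonneg: "0 \<le> first_hit_before adj v a b t"
  unfolding first_hit_before_def by (auto intro!: sum_nonneg walk_weight_nonneg)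

lemma sum_split_targets:
  fixes f :: "'v \<Rightarrow> real"
  assumes "finite N"
  shows "(\<Sum>w\<in>N. f w) = (\<Sum>w\<in>N. f w * (if w = a \<or> w = b then 1 else 0)) + (\<Sum>w\<in>{w\<in>N. w \<noteq> a \<and> w \<noteq> b}. f w)"
proof -
  have "(\<Sum>w\<in>{w\<in>N. w \<noteq> a \<and> w \<noteq> b}. f w) = (\<Sum>w\<in>N. if w \<noteq> a \<and> w \<noteq> b then f w else 0)"
    using assms by (rule sum.inter_filter)
  moreover have "(\<Sum>w\<in>N. f w) = (\<Sum>w\<in>N. f w * (if w = a \<or> w = b then 1 else 0) + (if w \<noteq> a \<and> w \<noteq> b then f w else 0))"
    by (rule sum.cong) auto
  ultimately show ?thesis by (simp add: sum.distrib)
qed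

lemma srw_split_targets:
  fixes F :: "'v \<Rightarrow> real"
  assumes fin: "finite {w. adj v w}" and ab: "a \<noteq> b"
  shows "(\<Sum>w\<in>{w. adj v w}. srw_prob adj v w * F w) =
     srw_prob adj v a * F a + srw_prob adj v b * F b + (\<Sum>w\<in>{w. adj v w \<and> w \<noteq> a \<and> w \<noteq> b}. srw_prob adj v w * F w)"
proof -
  let ?N = "{w. adj v w}"
  have "(\<Sum>w\<in>?N. srw_prob adj v w * F w) = (\<Sum>w\<in>?N. srw_prob adj v w * F w * (if w = a \<or> w = b then 1 else 0))
     + (\<Sum>w\<in>{w\<in>?N. w \<noteq> a \<and> w \<noteq> b}. srw_prob adj v w * F w)"
    by (rule sum_split_targets[OF fin])
  also have "{w\<in>?N. w \<noteq> a \<and> w \<noteq> b} = {w. adj v w \<and> w \<noteq> a \<and> w \<noteq> b}" by auto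
  also have "(\<Sum>w\<in>?N. srw_prob adj v w * F w * (if w = a \<or> w = b then 1 else 0)) =
     (\<Sum>w\<in>?N \<inter> {a, b}. srw_prob adj v w * F w)"
    using fin by (simp add: sum.inter_restrict if_distrib cong: if_cong)
  also have "\<dots> = (\<Sum>w\<in>{a, b}. srw_prob adj v w * F w)"
    by (rule sum.mono_neutral_left) (auto simp: srw_prob_def)
  also have "\<dots> = srw_prob adj v a * F a + srw_prob adj v b * F b" using ab by simp
  finally show ?thesis .
qed

subsection \<open>Survival probabilities and expected exit times\<close>

text \<open>survival adj a b t v is the probability that the walk from v has not hit a or b during
  the steps 1..t.\<close>

fun survival :: "('v \<Rightarrow> 'v \<Rightarrow> bool) \<Rightarrow> 'v \<Rightarrow> 'v \<Rightarrow> nat \<Rightarrow> 'v \<Rightarrow> real" where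
  "survival adj a b 0 v = 1"
| "survival adj a b (Suc t) v = (\<Sum>w\<in>{w. adj v w \<and> w \<noteq> a \<and> w \<noteq> b}. srw_prob adj v w * survival adj a b t w)"

lemma survival_nonneg: "0 \<le> survival adj a b t v"
  by (induction t arbitrary: v) (auto intro!: sum_nonneg mult_nonneg_nonneg srw_prob_nonneg)

lemma exit_dist_survival:
  assumes fin: "\<And>u. finite {w. adj u w}"
    and ne: "\<And>u. u \<in> R \<Longrightarrow> {w. adj u w} \<noteq> {}"
    and clo: "\<And>u w. u \<in> R \<Longrightarrow> adj u w \<Longrightarrow> w \<noteq> a \<Longrightarrow> w \<noteq> b \<Longrightarrow> w \<in> R"
    and v: "v \<in> R"
  shows "exit_dist adj v a b (Suc t) = survival adj a b t v - survival adj a b (Suc t) v"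
  using v
proof (induction t arbitrary: v)
  case 0
  have "(\<Sum>w\<in>{w. adj v w}. srw_prob adj v w) = 1" by (rule srw_sum_one[where adj = adj and v = v, OF fin ne[OF 0]])
  moreover have "{w\<in>{w. adj v w}. w \<noteq> a \<and> w \<noteq> b} = {w. adj v w \<and> w \<noteq> a \<and> w \<noteq> b}" by auto
  ultimately show ?case
    using sum_split_targets[where f = "srw_prob adj v" and a = a and b = b, OF fin[of v]]
    by (simp add: exit_dist_stopped_mass stopped_mass_one[OF fin])
next
  case (Suc t)
  have "exit_dist adj v a b (Suc (Suc t)) =
     (\<Sum>w\<in>{w. adj v w \<and> w \<noteq> a \<and> w \<noteq> b}. srw_prob adj v w * (survival adj a b t w - survival adj a b (Suc t) w))"
    unfolding exit_dist_step[OF fin] using Suc.IH clo Suc.prems by (intro sum.cong) auto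
  also have "\<dots> = survival adj a b (Suc t) v - survival adj a b (Suc (Suc t)) v"
    by (simp add: right_diff_distrib sum_subtractf)
  finally show ?case .
qed

lemma survival_sum_bound:
  assumes clo: "\<And>u w. u \<in> R \<Longrightarrow> adj u w \<Longrightarrow> w \<noteq> a \<Longrightarrow> w \<noteq> b \<Longrightarrow> w \<in> R"
    and g0: "\<And>u. u \<in> R \<Longrightarrow> 0 \<le> g u"
    and sup: "\<And>u. u \<in> R \<Longrightarrow> u \<noteq> a \<Longrightarrow> u \<noteq> b \<Longrightarrow>
        1 + (\<Sum>w\<in>{w. adj u w \<and> w \<noteq> a \<and> w \<noteq> b}. srw_prob adj u w * g w) \<le> g u"
    and v: "v \<in> R"
  shows "(\<Sum>t<n. survival adj a b t v) \<le> 1 + (\<Sum>w\<in>{w. adj v w \<and> w \<noteq> a \<and> w \<noteq> b}. srw_prob adj v w * g w)"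
  using v
proof (induction n arbitrary: v)
  case 0
  have "0 \<le> srw_prob adj v w * g w" if "w \<in> {w. adj v w \<and> w \<noteq> a \<and> w \<noteq> b}" for w
    by (rule mult_nonneg_nonneg[OF srw_prob_nonneg g0]) (use that clo[OF 0] in auto)
  hence "0 \<le> (\<Sum>w\<in>{w. adj v w \<and> w \<noteq> a \<and> w \<noteq> b}. srw_prob adj v w * g w)" by (rule sum_nonneg)
  then show ?case by simp
next
  case (Suc n)
  let ?N = "{w. adj v w \<and> w \<noteq> a \<and> w \<noteq> b}"
  have shift: "(\<Sum>t<Suc n. survival adj a b t v) = 1 + (\<Sum>t<n. survival adj a b (Suc t) v)"
    unfolding sum.lessThan_Suc_shift by simp
  have swap: "(\<Sum>t<n. survival adj a b (Suc t) v) = (\<Sum>w\<in>?N. srw_prob adj v w * (\<Sum>t<n. survival adj a b t w))"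
    unfolding survival.simps sum_distrib_left by (rule sum.swap)
  have "(\<Sum>w\<in>?N. srw_prob adj v w * (\<Sum>t<n. survival adj a b t w)) \<le> (\<Sum>w\<in>?N. srw_prob adj v w * g w)"
  proof (rule sum_mono)
    fix w assume w: "w \<in> ?N"
    hence wR: "w \<in> R" using clo[OF Suc.prems] by blast
    from w have wa: "w \<noteq> a" and wb: "w \<noteq> b" by auto
    have "(\<Sum>t<n. survival adj a b t w) \<le> g w"
      by (rule order_trans[OF Suc.IH[OF wR] sup[OF wR wa wb]])
    thus "srw_prob adj v w * (\<Sum>t<n. survival adj a b t w) \<le> srw_prob adj v w * g w"
      by (rule mult_left_mono[OF _ srw_prob_nonneg])
  qed
  then show ?case unfolding shift swap by linarith
qed

lemma survival_vanishes:
  assumes clo: "\<And>u w. u \<in> R \<Longrightarrow> adj u w \<Longrightarrow> w \<noteq> a \<Longrightarrow> w \<noteq> b \<Longrightarrow> w \<in> R"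
    and g0: "\<And>u. u \<in> R \<Longrightarrow> 0 \<le> g u"
    and sup: "\<And>u. u \<in> R \<Longrightarrow> u \<noteq> a \<Longrightarrow> u \<noteq> b \<Longrightarrow>
        1 + (\<Sum>w\<in>{w. adj u w \<and> w \<noteq> a \<and> w \<noteq> b}. srw_prob adj u w * g w) \<le> g u"
    and v: "v \<in> R"
  shows "(\<lambda>t. survival adj a b t v) \<longlonglongrightarrow> 0"
  by (rule summable_LIMSEQ_zero, rule summableI_nonneg_bounded[OF survival_nonneg])
     (rule survival_sum_bound[OF clo g0 sup v])

text \<open>The expected exit time is the sum of the survival probabilities (summation by parts),
  so the Lyapunov bound above bounds it; in particular the walk exits almost surely.\<close>

lemma exp_exit_le:
  assumes fin: "\<And>u. finite {w. adj u w}"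
    and ne: "\<And>u. u \<in> R \<Longrightarrow> {w. adj u w} \<noteq> {}"
    and clo: "\<And>u w. u \<in> R \<Longrightarrow> adj u w \<Longrightarrow> w \<noteq> a \<Longrightarrow> w \<noteq> b \<Longrightarrow> w \<in> R"
    and g0: "\<And>u. u \<in> R \<Longrightarrow> 0 \<le> g u"
    and sup: "\<And>u. u \<in> R \<Longrightarrow> u \<noteq> a \<Longrightarrow> u \<noteq> b \<Longrightarrow>
        1 + (\<Sum>w\<in>{w. adj u w \<and> w \<noteq> a \<and> w \<noteq> b}. srw_prob adj u w * g w) \<le> g u"
    and v: "v \<in> R"
  shows "exp_exit adj v a b \<le> ennreal (1 + (\<Sum>w\<in>{w. adj v w \<and> w \<noteq> a \<and> w \<noteq> b}. srw_prob adj v w * g w))"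
proof -
  define B where "B = 1 + (\<Sum>w\<in>{w. adj v w \<and> w \<noteq> a \<and> w \<noteq> b}. srw_prob adj v w * g w)"
  define Q where "Q = (\<lambda>t. survival adj a b t v)"
  define E where "E = (\<lambda>t. exit_dist adj v a b t)"
  have Qb: "(\<Sum>t<n. Q t) \<le> B" for n unfolding Q_def B_def by (rule survival_sum_bound[OF clo g0 sup v])
  have Q0: "0 \<le> Q t" for t unfolding Q_def by (rule survival_nonneg)
  have E0: "E 0 = 0" unfolding E_def exit_dist_def by simp
  have ES: "E (Suc t) = Q t - Q (Suc t)" for t unfolding E_def Q_def by (rule exit_dist_survival[OF fin ne clo v])
  have En: "0 \<le> E t" for t unfolding E_def by (rule exit_dist_nonneg)
  have "(\<lambda>t. E (Suc t)) sums (Q 0 - 0)"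
    unfolding ES by (rule telescope_sums'[OF survival_vanishes[OF clo g0 sup v, folded Q_def]])
  hence Es: "E sums 1" unfolding sums_Suc_iff by (simp add: E0 Q_def)
  have sumE: "(\<Sum>t. ennreal (E t)) = 1"
    using suminf_ennreal2[OF En sums_summable[OF Es]] sums_unique[OF Es] by simp
  have parts: "(\<Sum>t<Suc n. real t * E t) = (\<Sum>t<n. Q t) - real n * Q n" for n
    by (induction n) (simp_all add: E0 ES algebra_simps)
  have pb: "(\<Sum>t<n. real t * E t) \<le> B" for n
  proof (cases n)
    case (Suc m)
    have "0 \<le> real m * Q m" using Q0 by simp
    then show ?thesis unfolding Suc parts using Qb[of m] by simp
  qed (use Qb[of 0] in simp)
  have tEn: "0 \<le> real t * E t" for t using En by simp
  have stE: "summable (\<lambda>t. real t * E t)" by (rule summableI_nonneg_bounded[OF tEn pb])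
  have "(\<Sum>t. of_nat t * ennreal (E t)) = (\<Sum>t. ennreal (real t * E t))"
    by (rule suminf_cong) (simp add: ennreal_of_nat_eq_real_of_nat ennreal_mult En)
  also have "\<dots> = ennreal (\<Sum>t. real t * E t)" by (rule suminf_ennreal2[OF tEn stE])
  also have "\<dots> \<le> ennreal B" by (rule ennreal_leI, rule suminf_le_const[OF stE pb])
  finally have "(\<Sum>t. of_nat t * ennreal (E t)) \<le> ennreal B" .
  then show ?thesis unfolding exp_exit_def B_def[symmetric] using sumE by (simp add: E_def)
qed

subsection \<open>Hitting probabilities from harmonic functions\<close>

text \<open>killed_mean adj a b f t v is the expectation of f at time t on the event that the walk from
  v has not hit a or b before.\<close>

fun killed_mean :: "('v \<Rightarrow> 'v \<Rightarrow> bool) \<Rightarrow> 'v \<Rightarrow> 'v \<Rightarrow> ('v \<Rightarrow> real) \<Rightarrow> nat \<Rightarrow> 'v \<Rightarrow> real" where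
  "killed_mean adj a b f 0 v = f v"
| "killed_mean adj a b f (Suc t) v =
     (\<Sum>w\<in>{w. adj v w \<and> w \<noteq> a \<and> w \<noteq> b}. srw_prob adj v w * killed_mean adj a b f t w)"

text \<open>Optional stopping for a function f that is harmonic off the targets with boundary values
  f a = 1, f b = 0: f v splits into the probability of hitting a first within n steps and the
  mean of f on survival up to time n.\<close>

lemma harmonic_decomposition:
  assumes fin: "\<And>u. finite {w. adj u w}"
    and clo: "\<And>u w. u \<in> R \<Longrightarrow> adj u w \<Longrightarrow> w \<noteq> a \<Longrightarrow> w \<noteq> b \<Longrightarrow> w \<in> R"
    and harm: "\<And>u. u \<in> R \<Longrightarrow> u \<noteq> a \<Longrightarrow> u \<noteq> b \<Longrightarrow>
        srw_prob adj u a + (\<Sum>w\<in>{w. adj u w \<and> w \<noteq> a \<and> w \<noteq> b}. srw_prob adj u w * f w) = f u"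
    and v: "v \<in> R" "v \<noteq> a" "v \<noteq> b"
  shows "(\<Sum>t<n. first_hit_before adj v a b (Suc t)) + killed_mean adj a b f n v = f v"
  using v
proof (induction n arbitrary: v)
  case (Suc n)
  let ?N = "{w. adj v w \<and> w \<noteq> a \<and> w \<noteq> b}"
  have e1: "(\<Sum>t<Suc n. first_hit_before adj v a b (Suc t)) =
      srw_prob adj v a + (\<Sum>t<n. first_hit_before adj v a b (Suc (Suc t)))"
    unfolding sum.lessThan_Suc_shift first_hit_one[OF fin] ..
  have e2: "(\<Sum>t<n. first_hit_before adj v a b (Suc (Suc t))) =
      (\<Sum>w\<in>?N. srw_prob adj v w * (\<Sum>t<n. first_hit_before adj w a b (Suc t)))"
    unfolding first_hit_step[OF fin] sum_distrib_left by (rule sum.swap)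
  have e3: "(\<Sum>w\<in>?N. srw_prob adj v w * (\<Sum>t<n. first_hit_before adj w a b (Suc t))) +
      killed_mean adj a b f (Suc n) v = (\<Sum>w\<in>?N. srw_prob adj v w * f w)"
    unfolding killed_mean.simps sum.distrib[symmetric] distrib_left[symmetric]
  proof (rule sum.cong[OF refl])
    fix w assume w: "w \<in> ?N"
    hence wR: "w \<in> R" using clo[OF Suc.prems(1)] by blast
    from w have wa: "w \<noteq> a" and wb: "w \<noteq> b" by auto
    show "srw_prob adj v w * ((\<Sum>t<n. first_hit_before adj w a b (Suc t)) + killed_mean adj a b f n w) =
        srw_prob adj v w * f w"
      using Suc.IH[OF wR wa wb] by simp
  qed
  show ?case unfolding e1 e2 using e3 harm[OF Suc.prems] by linarith
qed simp

lemma killed_mean_bounds: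
  assumes clo: "\<And>u w. u \<in> R \<Longrightarrow> adj u w \<Longrightarrow> w \<noteq> a \<Longrightarrow> w \<noteq> b \<Longrightarrow> w \<in> R"
    and f0: "\<And>u. u \<in> R \<Longrightarrow> 0 \<le> f u" and f1: "\<And>u. u \<in> R \<Longrightarrow> f u \<le> 1"
    and v: "v \<in> R"
  shows "0 \<le> killed_mean adj a b f n v \<and> killed_mean adj a b f n v \<le> survival adj a b n v"
  using v
proof (induction n arbitrary: v)
  case (Suc n)
  let ?N = "{w. adj v w \<and> w \<noteq> a \<and> w \<noteq> b}"
  have "0 \<le> srw_prob adj v w * killed_mean adj a b f n w \<and>
        srw_prob adj v w * killed_mean adj a b f n w \<le> srw_prob adj v w * survival adj a b n w"
    if w: "w \<in> ?N" for w
  proof -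
    have wR: "w \<in> R" using w clo[OF Suc.prems] by blast
    from Suc.IH[OF wR] show ?thesis
      using srw_prob_nonneg[of adj v w] by (auto intro: mult_left_mono mult_nonneg_nonneg)
  qed
  then show ?case by (auto intro!: sum_nonneg sum_mono)
qed (use f0 f1 in simp)

lemma first_hit_sums:
  assumes fin: "\<And>u. finite {w. adj u w}"
    and clo: "\<And>u w. u \<in> R \<Longrightarrow> adj u w \<Longrightarrow> w \<noteq> a \<Longrightarrow> w \<noteq> b \<Longrightarrow> w \<in> R"
    and harm: "\<And>u. u \<in> R \<Longrightarrow> u \<noteq> a \<Longrightarrow> u \<noteq> b \<Longrightarrow>
        srw_prob adj u a + (\<Sum>w\<in>{w. adj u w \<and> w \<noteq> a \<and> w \<noteq> b}. srw_prob adj u w * f w) = f u"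
    and f0: "\<And>u. u \<in> R \<Longrightarrow> 0 \<le> f u" and f1: "\<And>u. u \<in> R \<Longrightarrow> f u \<le> 1"
    and absorbed: "(\<lambda>t. survival adj a b t v) \<longlonglongrightarrow> 0"
    and v: "v \<in> R" "v \<noteq> a" "v \<noteq> b"
  shows "(\<lambda>t. first_hit_before adj v a b (Suc t)) sums f v"
proof -
  have "(\<lambda>n. killed_mean adj a b f n v) \<longlonglongrightarrow> 0"
    by (rule tendsto_sandwich[OF _ _ tendsto_const absorbed])
       (use killed_mean_bounds[OF clo f0 f1 v(1)] in auto)
  hence "(\<lambda>n. f v - killed_mean adj a b f n v) \<longlonglongrightarrow> f v - 0"
    by (intro tendsto_diff tendsto_const)
  moreover have "(\<lambda>n. f v - killed_mean adj a b f n v) = (\<lambda>n. \<Sum>t<n. first_hit_before adj v a b (Suc t))"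
    using harmonic_decomposition[OF fin clo harm v] by (auto simp: algebra_simps)
  ultimately show ?thesis unfolding sums_def by simp
qed

text \<open>Hitting probability from an arbitrary start v \<in> R (possibly a target itself, as
  L 0 is in the theorem): condition on the first step.\<close>

lemma hit_before_harmonic:
  assumes fin: "\<And>u. finite {w. adj u w}"
    and clo: "\<And>u w. u \<in> R \<Longrightarrow> adj u w \<Longrightarrow> w \<noteq> a \<Longrightarrow> w \<noteq> b \<Longrightarrow> w \<in> R"
    and harm: "\<And>u. u \<in> R \<Longrightarrow> u \<noteq> a \<Longrightarrow> u \<noteq> b \<Longrightarrow>
        srw_prob adj u a + (\<Sum>w\<in>{w. adj u w \<and> w \<noteq> a \<and> w \<noteq> b}. srw_prob adj u w * f w) = f u"
    and f0: "\<And>u. u \<in> R \<Longrightarrow> 0 \<le> f u" and f1: "\<And>u. u \<in> R \<Longrightarrow> f u \<le> 1"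
    and absorbed: "\<And>u. u \<in> R \<Longrightarrow> (\<lambda>t. survival adj a b t u) \<longlonglongrightarrow> 0"
    and v: "v \<in> R"
  shows "hit_before adj v a b =
     ennreal (srw_prob adj v a + (\<Sum>w\<in>{w. adj v w \<and> w \<noteq> a \<and> w \<noteq> b}. srw_prob adj v w * f w))"
proof -
  let ?N = "{w. adj v w \<and> w \<noteq> a \<and> w \<noteq> b}"
  let ?F = "\<lambda>t. first_hit_before adj v a b t"
  have "(\<lambda>t. \<Sum>w\<in>?N. srw_prob adj v w * first_hit_before adj w a b (Suc t)) sums (\<Sum>w\<in>?N. srw_prob adj v w * f w)"
  proof (rule sums_sum, rule sums_mult)
    fix w assume w: "w \<in> ?N"
    hence wR: "w \<in> R" using clo[OF v] by blast
    from w have wa: "w \<noteq> a" and wb: "w \<noteq> b" by auto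
    show "(\<lambda>t. first_hit_before adj w a b (Suc t)) sums f w"
      by (rule first_hit_sums[OF fin clo harm f0 f1 absorbed[OF wR] wR wa wb])
  qed
  hence "(\<lambda>t. ?F (Suc (Suc t))) sums (\<Sum>w\<in>?N. srw_prob adj v w * f w)"
    unfolding first_hit_step[OF fin] .
  hence "(\<lambda>t. ?F (Suc t)) sums ((\<Sum>w\<in>?N. srw_prob adj v w * f w) + srw_prob adj v a)"
    using sums_Suc_iff[of "\<lambda>t. ?F (Suc t)"] first_hit_one[OF fin] by simp
  hence "?F sums ((\<Sum>w\<in>?N. srw_prob adj v w * f w) + srw_prob adj v a)"
    using sums_Suc_iff[of ?F] by (simp add: first_hit_before_def)
  hence S: "?F sums (srw_prob adj v a + (\<Sum>w\<in>?N. srw_prob adj v w * f w))" by (simp add: add.commute)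
  have "hit_before adj v a b = ennreal (suminf ?F)"
    unfolding hit_before_def by (rule suminf_ennreal2[OF first_hit_nonneg sums_summable[OF S]])
  then show ?thesis using sums_unique[OF S] by simp
qed

section \<open>The Green's function of a segment\<close>

text \<open>green H c a = min(a, c) (H - max(a, c)) / H is the Green's function of simple random
  walk on {0..H} killed at 0 and H, with pole c: its discrete Laplacian is -1 at c and 0
  elsewhere.\<close>

definition green :: "nat \<Rightarrow> nat \<Rightarrow> nat \<Rightarrow> real" where
  "green H c a = real (min a c) * (real H - real (max a c)) / real H"

lemma green_nonneg: "a \<le> H \<Longrightarrow> c \<le> H \<Longrightarrow> 0 \<le> green H c a"
  unfolding green_def by (auto intro!: divide_nonneg_nonneg mult_nonneg_nonneg)

lemma green_le:
  assumes a: "a \<le> H" and c: "c \<le> H"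
  shows "green H c a \<le> real c"
proof (cases "H = 0")
  case False
  have "real (min a c) * (real H - real (max a c)) \<le> real c * real H"
    by (rule mult_mono) (use a c in auto)
  thus ?thesis using False unfolding green_def by (simp add: divide_le_eq)
qed (simp add: green_def)

lemma green_boundary: "green H c H = 0" "green H c 0 = 0" if "c \<le> H"
  using that by (auto simp: green_def max_def)

lemma green_laplacian:
  assumes "0 < H" "1 \<le> a" "a + 1 \<le> H" "1 \<le> c" "c \<le> H"
  shows "green H c (a - 1) + green H c (a + 1) = 2 * green H c a - (if a = c then 1 else 0)"
proof -
  consider "a < c" | "a = c" | "c < a" by arith
  then show ?thesis
  proof cases
    case 1
    hence "min (a - 1) c = a - 1" "max (a - 1) c = c" "min (a + 1) c = a + 1" "max (a+1) c = c"
      "min a c = a" "max a c = c" by auto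
    then show ?thesis using 1 assms unfolding green_def by (simp add: of_nat_diff field_simps)
  next
    case 2
    hence "min (a - 1) c = a - 1" "max (a - 1) c = c" "min (a + 1) c = c" "max (a+1) c = a + 1"
      "min a c = a" "max a c = a" by auto
    then show ?thesis using 2 assms unfolding green_def by (simp add: of_nat_diff field_simps)
  next
    case 3
    hence "min (a - 1) c = c" "max (a - 1) c = a - 1" "min (a + 1) c = c" "max (a+1) c = a + 1"
      "min a c = c" "max a c = a" by auto
    then show ?thesis using 3 assms unfolding green_def by (simp add: of_nat_diff field_simps)
  qed
qed

section \<open>The graph G\<close>

text \<open>The standing assumptions on G, except the growth condition relating h and n, which is
  only needed for the final numerical estimate.\<close>

locale gadget_graph =
  fixes \<rho> :: real and h n :: "nat \<Rightarrow> nat" and E :: "nat \<Rightarrow> nat \<Rightarrow> nat \<Rightarrow> bool" and vv :: "nat \<Rightarrow> nat"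
  assumes rho: "\<rho> < 1" and h_mono: "strict_mono h" and h0: "0 < h 0"
    and expanders: "\<And>i. 1 \<le> i \<Longrightarrow> cubic_expander \<rho> (n i) (E i)"
    and vv_less: "\<And>i. 1 \<le> i \<Longrightarrow> vv i < n i"
begin

abbreviation "adj \<equiv> adjG h n E vv"

lemma h_ge: "j \<le> h j" using h_mono by (rule strict_mono_imp_increasing)

lemma h_pos: "0 < h j"
  using h0 strict_mono_less_eq[OF h_mono, of 0 j] by simp

lemma h_inj: "h i = h j \<longleftrightarrow> i = j" using h_mono strict_mono_eq by blast

lemma adj_LL[simp]: "adj (L a) (L b) \<longleftrightarrow> a = b + 1 \<or> b = a + 1" by (simp add: adjG_def)
lemma adj_LX[simp]: "adj (L a) (X j y) \<longleftrightarrow> 1 \<le> j \<and> y = vv j \<and> a = h j" by (simp add: adjG_def)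
lemma adj_XL[simp]: "adj (X i x) (L b) \<longleftrightarrow> 1 \<le> i \<and> x = vv i \<and> b = h i" by (simp add: adjG_def)
lemma adj_XX[simp]: "adj (X i x) (X j y) \<longleftrightarrow> i = j \<and> 1 \<le> i \<and> x < n i \<and> y < n i \<and> E i x y"
  by (simp add: adjG_def)

lemma nbr_L: "{w. adj (L a) w} = L ` {b. a = b + 1 \<or> b = a + 1} \<union> (\<lambda>j. X j (vv j)) ` {j. 1 \<le> j \<and> h j = a}"
proof -
  have "w \<in> {w. adj (L a) w} \<longleftrightarrow> w \<in> L ` {b. a = b + 1 \<or> b = a + 1} \<union> (\<lambda>j. X j (vv j)) ` {j. 1 \<le> j \<and> h j = a}"
    for w by (cases w) auto
  then show ?thesis by blast
qed

lemma nbr_plain: assumes "1 \<le> a" "\<forall>j\<ge>1. h j \<noteq> a"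
  shows "{w. adj (L a) w} = {L (a - 1), L (a + 1)}"
  unfolding nbr_L using assms by (auto simp: image_def)

lemma nbr_hub: assumes "1 \<le> j"
  shows "{w. adj (L (h j)) w} = {L (h j - 1), L (h j + 1), X j (vv j)}"
proof -
  have "{j'. 1 \<le> j' \<and> h j' = h j} = {j}" using assms h_inj by auto
  moreover have "{b. h j = b + 1 \<or> b = h j + 1} = {h j - 1, h j + 1}" using h_pos[of j] by auto
  ultimately show ?thesis unfolding nbr_L by auto
qed

lemma nbr_L0: "{w. adj (L 0) w} = {L 1}"
proof -
  have none: "{j. 1 \<le> j \<and> h j = 0} = {}" using h_pos by auto
  have one: "{b. (0::nat) = b + 1 \<or> b = 0 + 1} = {1}" by auto
  show ?thesis unfolding nbr_L none one by simp
qed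

lemma nbr_X: assumes "1 \<le> i" "x < n i"
  shows "{w. adj (X i x) w} = X i ` {y. y < n i \<and> E i x y} \<union> (if x = vv i then {L (h i)} else {})"
proof -
  have "w \<in> {w. adj (X i x) w} \<longleftrightarrow> w \<in> X i ` {y. y < n i \<and> E i x y} \<union> (if x = vv i then {L (h i)} else {})"
    for w using assms by (cases w) auto
  then show ?thesis by blast
qed

lemma finite_nbr: "finite {w. adj u w}"
proof (cases u)
  case (L a)
  have "{j. 1 \<le> j \<and> h j = a} \<subseteq> {..a}" using h_ge by auto
  hence "finite {j. 1 \<le> j \<and> h j = a}" by (rule finite_subset) simp
  moreover have "finite {b. a = b + 1 \<or> b = a + 1}" by (rule finite_subset[of _ "{..a+1}"]) auto
  ultimately show ?thesis unfolding L nbr_L by simp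
next
  case (X i x)
  have "{w. adj (X i x) w} \<subseteq> X i ` {..<n i} \<union> {L (h i)}"
  proof
    fix w assume "w \<in> {w. adj (X i x) w}"
    thus "w \<in> X i ` {..<n i} \<union> {L (h i)}" by (cases w) auto
  qed
  thus ?thesis unfolding X by (rule finite_subset) simp
qed

lemma card_E: "1 \<le> i \<Longrightarrow> x < n i \<Longrightarrow> card {y. y < n i \<and> E i x y} = 3"
  using expanders unfolding cubic_expander_def by blast

lemma sum_nbr_X:
  assumes "1 \<le> j" "x < n j"
  shows "(\<Sum>w\<in>{w. adj (X j x) w}. F w) = (\<Sum>y\<in>{y. y < n j \<and> E j x y}. F (X j y)) + (if x = vv j then F (L (h j)) else 0)"
    and "card {w. adj (X j x) w} = 3 + (if x = vv j then 1 else 0)"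
proof -
  let ?Y = "{y. y < n j \<and> E j x y}"
  let ?S = "(if x = vv j then {L (h j)} else {})"
  have inj: "inj_on (X j) ?Y" by (auto simp: inj_on_def)
  have disj: "X j ` ?Y \<inter> ?S = {}" by auto
  have "(\<Sum>w\<in>{w. adj (X j x) w}. F w) = (\<Sum>w\<in>X j ` ?Y. F w) + (\<Sum>w\<in>?S. F w)"
    unfolding nbr_X[OF assms] by (rule sum.union_disjoint) (use disj in auto)
  also have "(\<Sum>w\<in>X j ` ?Y. F w) = (\<Sum>y\<in>?Y. F (X j y))" by (rule sum.reindex_cong[OF inj refl refl])
  finally show "(\<Sum>w\<in>{w. adj (X j x) w}. F w) = (\<Sum>y\<in>?Y. F (X j y)) + (if x = vv j then F (L (h j)) else 0)"
    by simp
  have "card {w. adj (X j x) w} = card (X j ` ?Y) + card ?S"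
    unfolding nbr_X[OF assms] by (rule card_Un_disjoint) (use disj in auto)
  also have "card (X j ` ?Y) = 3" using card_image[OF inj] card_E[OF assms] by simp
  finally show "card {w. adj (X j x) w} = 3 + (if x = vv j then 1 else 0)" by simp
qed

lemma vertex_closed: "is_vertex n u \<Longrightarrow> adj u w \<Longrightarrow> is_vertex n w"
  by (cases u; cases w) (auto simp: is_vertex_def vv_less)

lemma nbr_nonempty: "is_vertex n u \<Longrightarrow> {w. adj u w} \<noteq> {}"
proof (cases u)
  case (L a)
  then show ?thesis by (auto intro!: exI[of _ "L (a+1)"])
next
  case (X i x)
  assume "is_vertex n u"
  hence ix: "1 \<le> i" "x < n i" using X by (auto simp: is_vertex_def)
  have "{y. y < n i \<and> E i x y} \<noteq> {}" using card_E[OF ix] by (metis card.empty zero_neq_numeral)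
  then obtain y where "y < n i" "E i x y" by auto
  thus ?thesis using X ix by (auto intro!: exI[of _ "X i y"])
qed

lemma region_closed:
  assumes "u \<in> {u. is_vertex n u \<and> ht h u < H}" "adj u w" "w \<noteq> L H"
  shows "w \<in> {u. is_vertex n u \<and> ht h u < H}"
proof -
  have "ht h w < H" using assms by (cases u; cases w) (auto simp: ht_def)
  thus ?thesis using vertex_closed assms by auto
qed

subsection \<open>The height is harmonic\<close>

lemma harmonic_ht:
  assumes "is_vertex n u" "u \<noteq> L 0"
  shows "(\<Sum>w\<in>{w. adj u w}. srw_prob adj u w * real (ht h w)) = real (ht h u)"
proof (cases u)
  case (L a)
  have a: "1 \<le> a" using assms L by auto
  show ?thesis
  proof (cases "\<exists>j\<ge>1. h j = a")
    case True
    then obtain j where j: "1 \<le> j" "h j = a" by auto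
    have d: "L (h j - 1) \<noteq> L (h j + 1)" "L (h j - 1) \<noteq> X j (vv j)" "L (h j + 1) \<noteq> X j (vv j)" by auto
    have "(\<Sum>w\<in>{w. adj (L (h j)) w}. real (ht h w)) / real (card {w. adj (L (h j)) w}) = real (h j)"
      unfolding nbr_hub[OF j(1)] using d h_pos[of j] by (simp add: ht_def of_nat_diff)
    then show ?thesis unfolding L j(2)[symmetric] srw_sum[of adj] by (simp add: ht_def)
  next
    case False
    hence nh: "\<forall>j\<ge>1. h j \<noteq> a" by auto
    have "(\<Sum>w\<in>{w. adj (L a) w}. real (ht h w)) / real (card {w. adj (L a) w}) = real a"
      unfolding nbr_plain[OF a nh] using a by (simp add: ht_def of_nat_diff)
    then show ?thesis unfolding L srw_sum[of adj] by (simp add: ht_def)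
  qed
next
  case (X i x)
  have "\<forall>w\<in>{w. adj u w}. ht h w = h i" using X by (auto simp: ht_def split: vert.split)
  hence "(\<Sum>w\<in>{w. adj u w}. real (ht h w)) = real (card {w. adj u w}) * real (h i)" by simp
  moreover have "real (card {w. adj u w}) \<noteq> 0" using nbr_nonempty[OF assms(1)] finite_nbr by simp
  ultimately show ?thesis unfolding srw_sum[of adj] using X by (simp add: ht_def)
qed

subsection \<open>A Lyapunov function for the exit time below height H\<close>

definition gadget_potential :: "nat \<Rightarrow> nat \<Rightarrow> real" where
  "gadget_potential j = (SOME f. exit_potential (n j) (E j) (vv j) f)"

lemma gadget_potential: "1 \<le> j \<Longrightarrow> exit_potential (n j) (E j) (vv j) (gadget_potential j)"
  unfolding gadget_potential_def
  using expander_exit_potential[OF expanders rho vv_less] by (rule someI_ex)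

text \<open>The Laplacian defect that the line part must supply at the hub of E_j: one unit for the
  step itself plus the excess of the gadget neighbour's value over the hub value.\<close>

definition hub_weight :: "nat \<Rightarrow> real" where
  "hub_weight j = 1 + gadget_potential j (vv j)"

lemma hub_weight_ge: "1 \<le> j \<Longrightarrow> 1 \<le> hub_weight j"
  using gadget_potential vv_less unfolding hub_weight_def exit_potential_def by fastforce

lemma hub_weight_le: "1 \<le> j \<Longrightarrow> hub_weight j \<le> 5 + 8 * 4 ^ n j"
  using gadget_potential vv_less unfolding hub_weight_def exit_potential_def by fastforce

definition hubs_below :: "nat \<Rightarrow> nat set" where
  "hubs_below H = {j. 1 \<le> j \<and> h j < H}"

lemma finite_hubs_below: "finite (hubs_below H)"
  by (rule finite_subset[of _ "{..<H}"]) (auto simp: hubs_below_def intro: le_less_trans h_ge)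

lemma hubs_below_hub: "hubs_below (h i) = {1..<i}"
  unfolding hubs_below_def using strict_mono_less[OF h_mono] by auto

text \<open>On the half-line: the expected exit time a (H - a) of the plain segment, plus for each
  gadget below H its Green's function weighted by the hub weight.\<close>

definition line_lyap :: "nat \<Rightarrow> nat \<Rightarrow> real" where
  "line_lyap H a = real a * (real H - real a) + (\<Sum>j\<in>hubs_below H. hub_weight j * green H (h j) a)"

definition lyap :: "nat \<Rightarrow> vert \<Rightarrow> real" where
  "lyap H u = (case u of L a \<Rightarrow> line_lyap H a | X j x \<Rightarrow> line_lyap H (h j) + gadget_potential j x)"

lemma lyap_targets: "lyap H (L H) = 0" "lyap H (L 0) = 0"
proof -
  have "\<forall>j\<in>hubs_below H. green H (h j) H = 0 \<and> green H (h j) 0 = 0"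
    unfolding hubs_below_def using green_boundary by auto
  thus "lyap H (L H) = 0" "lyap H (L 0) = 0" unfolding lyap_def line_lyap_def by simp_all
qed

lemma line_lyap_nonneg: "a \<le> H \<Longrightarrow> 0 \<le> line_lyap H a"
  unfolding line_lyap_def hubs_below_def
  by (intro add_nonneg_nonneg mult_nonneg_nonneg sum_nonneg)
     (auto intro!: mult_nonneg_nonneg green_nonneg hub_weight_ge[THEN order_trans[rotated]])

lemma lyap_nonneg: assumes "is_vertex n u" "ht h u < H" shows "0 \<le> lyap H u"
proof (cases u)
  case (X j x)
  have "1 \<le> j" "x < n j" "h j < H" using assms X by (auto simp: is_vertex_def ht_def)
  then show ?thesis
    using X line_lyap_nonneg[of "h j" H] gadget_potential unfolding exit_potential_def
    by (fastforce simp: lyap_def)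
qed (use assms line_lyap_nonneg in \<open>simp add: lyap_def ht_def\<close>)

lemma line_lyap_laplacian:
  assumes "1 \<le> a" "a + 1 \<le> H"
  shows "line_lyap H (a - 1) + line_lyap H (a + 1) =
     2 * line_lyap H a - 2 - (\<Sum>j\<in>hubs_below H. if h j = a then hub_weight j else 0)"
proof -
  have quad: "real (a - 1) * (real H - real (a - 1)) + real (a + 1) * (real H - real (a + 1)) =
      2 * (real a * (real H - real a)) - 2"
    using assms by (simp add: of_nat_diff algebra_simps)
  have "hub_weight j * green H (h j) (a - 1) + hub_weight j * green H (h j) (a + 1) =
      2 * (hub_weight j * green H (h j) a) - (if h j = a then hub_weight j else 0)"
    if j: "j \<in> hubs_below H" for j
  proof -
    have "green H (h j) (a - 1) + green H (h j) (a + 1) = 2 * green H (h j) a - (if a = h j then 1 else 0)"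
      by (rule green_laplacian) (use assms j h_pos[of j] in \<open>auto simp: hubs_below_def\<close>)
    hence "hub_weight j * (green H (h j) (a - 1) + green H (h j) (a + 1)) =
        hub_weight j * (2 * green H (h j) a - (if a = h j then 1 else 0))" by simp
    then show ?thesis by (cases "a = h j") (simp_all add: algebra_simps)
  qed
  hence "(\<Sum>j\<in>hubs_below H. hub_weight j * green H (h j) (a - 1)) + (\<Sum>j\<in>hubs_below H. hub_weight j * green H (h j) (a + 1)) =
      2 * (\<Sum>j\<in>hubs_below H. hub_weight j * green H (h j) a) - (\<Sum>j\<in>hubs_below H. if h j = a then hub_weight j else 0)"
    by (simp add: sum.distrib[symmetric] sum_subtractf sum_distrib_left)
  then show ?thesis unfolding line_lyap_def using quad by (simp add: algebra_simps)
qed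

lemma hub_sum_plain: "\<forall>j\<ge>1. h j \<noteq> a \<Longrightarrow> (\<Sum>j\<in>hubs_below H. if h j = a then hub_weight j else 0) = 0"
  unfolding hubs_below_def by (rule sum.neutral) auto

lemma hub_sum_hub:
  assumes j: "1 \<le> j" "h j < H"
  shows "(\<Sum>j'\<in>hubs_below H. if h j' = h j then hub_weight j' else 0) = hub_weight j"
proof -
  have "(\<Sum>j'\<in>hubs_below H. if h j' = h j then hub_weight j' else 0) = (\<Sum>j'\<in>hubs_below H. if j' = j then hub_weight j' else 0)"
    using h_inj by (intro sum.cong) auto
  also have "\<dots> = hub_weight j" using j finite_hubs_below by (simp add: hubs_below_def)
  finally show ?thesis .
qed

text \<open>Supersolution property on the half-line: at a plain vertex the quadratic term pays for
  the step; at a hub the Green's function pays for the step and for the excursion into the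
  gadget, whose value there exceeds the hub value by gadget_potential j (vv j).\<close>

lemma lyap_super_line:
  assumes a: "1 \<le> a" "a + 1 \<le> H"
  shows "1 + (\<Sum>w\<in>{w. adj (L a) w}. lyap H w) / real (card {w. adj (L a) w}) \<le> lyap H (L a)"
proof (cases "\<exists>j\<ge>1. h j = a")
  case True
  then obtain j where j: "1 \<le> j" "h j = a" by auto
  have d: "L (h j - 1) \<noteq> L (h j + 1)" "L (h j - 1) \<noteq> X j (vv j)" "L (h j + 1) \<noteq> X j (vv j)" by auto
  have "line_lyap H (a - 1) + line_lyap H (a + 1) = 2 * line_lyap H a - 2 - hub_weight j"
    using line_lyap_laplacian[OF a] hub_sum_hub[of j H] j a by simp
  hence "(\<Sum>w\<in>{w. adj (L a) w}. lyap H w) = 3 * line_lyap H a - 3"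
    unfolding j(2)[symmetric] nbr_hub[OF j(1)] using d by (simp add: lyap_def hub_weight_def)
  moreover have "card {w. adj (L a) w} = 3" unfolding j(2)[symmetric] nbr_hub[OF j(1)] using d by simp
  ultimately show ?thesis by (simp add: lyap_def field_simps)
next
  case False
  hence nh: "\<forall>j\<ge>1. h j \<noteq> a" by auto
  have "line_lyap H (a - 1) + line_lyap H (a + 1) = 2 * line_lyap H a - 2"
    using line_lyap_laplacian[OF a] hub_sum_plain[OF nh] by simp
  hence "(\<Sum>w\<in>{w. adj (L a) w}. lyap H w) = 2 * line_lyap H a - 2"
    unfolding nbr_plain[OF a(1) nh] by (simp add: lyap_def)
  moreover have "card {w. adj (L a) w} = 2" unfolding nbr_plain[OF a(1) nh] by simp
  ultimately show ?thesis by (simp add: lyap_def field_simps)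
qed

text \<open>Inside a gadget the supersolution property is that of the exit potential, since all
  neighbours (including the hub) carry the same line value.\<close>

lemma lyap_super_gadget:
  assumes jx: "1 \<le> j" "x < n j"
  shows "1 + (\<Sum>w\<in>{w. adj (X j x) w}. lyap H w) / real (card {w. adj (X j x) w}) \<le> lyap H (X j x)"
proof -
  let ?Y = "{y. y < n j \<and> E j x y}"
  have pot: "exit_potential (n j) (E j) (vv j) (gadget_potential j)" by (rule gadget_potential[OF jx(1)])
  have sY: "(\<Sum>y\<in>?Y. lyap H (X j y)) = 3 * line_lyap H (h j) + (\<Sum>y\<in>?Y. gadget_potential j y)"
    using card_E[OF jx] by (simp add: lyap_def sum.distrib)
  show ?thesis
  proof (cases "x = vv j")
    case True
    have "1 + (\<Sum>y\<in>?Y. gadget_potential j y) / 4 \<le> gadget_potential j x"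
      using pot True unfolding exit_potential_def by simp
    then show ?thesis unfolding sum_nbr_X[OF jx] using True sY by (simp add: lyap_def field_simps)
  next
    case False
    have "1 + (\<Sum>y\<in>?Y. gadget_potential j y) / 3 \<le> gadget_potential j x"
      using pot False jx unfolding exit_potential_def by simp
    then show ?thesis unfolding sum_nbr_X[OF jx] using False sY by (simp add: lyap_def field_simps)
  qed
qed

lemma lyap_super:
  assumes H: "1 \<le> H" and u: "is_vertex n u" "ht h u < H" "u \<noteq> L H" "u \<noteq> L 0"
  shows "1 + (\<Sum>w\<in>{w. adj u w \<and> w \<noteq> L H \<and> w \<noteq> L 0}. srw_prob adj u w * lyap H w) \<le> lyap H u"
proof -
  have "1 + (\<Sum>w\<in>{w. adj u w}. lyap H w) / real (card {w. adj u w}) \<le> lyap H u"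
  proof (cases u)
    case (L a)
    then show ?thesis using lyap_super_line[of a H] u by (auto simp: ht_def)
  next
    case (X j x)
    then show ?thesis using lyap_super_gadget[of j x H] u by (auto simp: is_vertex_def)
  qed
  moreover have "L H \<noteq> L 0" using H by simp
  ultimately show ?thesis
    using srw_split_targets[where adj = adj and v = u and a = "L H" and b = "L 0" and F = "lyap H", OF finite_nbr]
    by (simp add: srw_sum[of adj] lyap_targets)
qed

definition gadget_cost :: "nat \<Rightarrow> real" where
  "gadget_cost H = (\<Sum>j\<in>hubs_below H. (5 + 8 * 4 ^ n j) * real (h j))"

lemma gadget_cost_nonneg: "0 \<le> gadget_cost H"
  unfolding gadget_cost_def by (intro sum_nonneg) simp

lemma line_lyap_le: assumes "a \<le> H" shows "line_lyap H a \<le> real H ^ 2 / 4 + gadget_cost H"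
proof -
  have "real a * (real H - real a) \<le> real H ^ 2 / 4"
    using sum_squares_ge_zero[of "real H - 2 * real a" 0] by (simp add: power2_eq_square algebra_simps)
  moreover have "(\<Sum>j\<in>hubs_below H. hub_weight j * green H (h j) a) \<le> gadget_cost H"
    unfolding gadget_cost_def
  proof (rule sum_mono)
    fix j assume "j \<in> hubs_below H"
    hence j1: "1 \<le> j" and hj: "h j < H" by (auto simp: hubs_below_def)
    show "hub_weight j * green H (h j) a \<le> (5 + 8 * 4 ^ n j) * real (h j)"
      by (rule mult_mono[OF hub_weight_le[OF j1] green_le])
         (use assms hj hub_weight_ge[OF j1] green_nonneg[of a H "h j"] in auto)
  qed
  ultimately show ?thesis unfolding line_lyap_def by simp
qed

lemma lyap_le: assumes "is_vertex n u" "ht h u < H"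
  shows "lyap H u \<le> real H ^ 2 / 4 + 2 * gadget_cost H"
proof (cases u)
  case (L a) then show ?thesis using assms line_lyap_le[of a H] gadget_cost_nonneg[of H] by (simp add: lyap_def ht_def)
next
  case (X j x)
  have jx: "1 \<le> j" "x < n j" "h j < H" using assms X by (auto simp: is_vertex_def ht_def)
  have "gadget_potential j x \<le> 4 + 8 * 4 ^ n j"
    using gadget_potential[OF jx(1)] jx(2) unfolding exit_potential_def by simp
  also have "\<dots> \<le> (5 + 8 * 4 ^ n j) * real (h j)"
    using mult_left_mono[of 1 "real (h j)" "5 + 8 * 4 ^ n j"] h_pos[of j] by simp
  also have "\<dots> \<le> gadget_cost H"
    unfolding gadget_cost_def by (rule member_le_sum) (use jx finite_hubs_below in \<open>auto simp: hubs_below_def\<close>)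
  finally show ?thesis using X line_lyap_le[of "h j" H] jx by (simp add: lyap_def)
qed

subsection \<open>Hitting probabilities and exit times in G\<close>

lemma region_lyapunov:
  assumes H: "1 \<le> H"
  defines "R \<equiv> {u. is_vertex n u \<and> ht h u < H}"
  shows "\<And>u w. u \<in> R \<Longrightarrow> adj u w \<Longrightarrow> w \<noteq> L H \<Longrightarrow> w \<noteq> L 0 \<Longrightarrow> w \<in> R"
    and "\<And>u. u \<in> R \<Longrightarrow> 0 \<le> lyap H u"
    and "\<And>u. u \<in> R \<Longrightarrow> u \<noteq> L H \<Longrightarrow> u \<noteq> L 0 \<Longrightarrow>
           1 + (\<Sum>w\<in>{w. adj u w \<and> w \<noteq> L H \<and> w \<noteq> L 0}. srw_prob adj u w * lyap H w) \<le> lyap H u"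
proof -
  show "\<And>u w. u \<in> R \<Longrightarrow> adj u w \<Longrightarrow> w \<noteq> L H \<Longrightarrow> w \<noteq> L 0 \<Longrightarrow> w \<in> R"
    unfolding R_def by (rule region_closed)
  show "0 \<le> lyap H u" if "u \<in> R" for u
    using that lyap_nonneg unfolding R_def by blast
  show "1 + (\<Sum>w\<in>{w. adj u w \<and> w \<noteq> L H \<and> w \<noteq> L 0}. srw_prob adj u w * lyap H w) \<le> lyap H u"
    if "u \<in> R" "u \<noteq> L H" "u \<noteq> L 0" for u
    using that lyap_super[OF H] unfolding R_def by blast
qed

lemma region_absorbed:
  assumes H: "1 \<le> H" and u: "is_vertex n u" "ht h u < H"
  shows "(\<lambda>t. survival adj (L H) (L 0) t u) \<longlonglongrightarrow> 0"
proof -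
  have "u \<in> {u. is_vertex n u \<and> ht h u < H}" using u by simp
  with region_lyapunov[OF H] show ?thesis by (rule survival_vanishes)
qed

lemma exit_time_estimate:
  assumes H: "1 \<le> H" and v: "is_vertex n v" "ht h v < H"
  shows "exp_exit adj v (L H) (L 0) \<le> ennreal (1 + (real H ^ 2 / 4 + 2 * gadget_cost H))"
proof -
  let ?R = "{u. is_vertex n u \<and> ht h u < H}"
  let ?bound = "real H ^ 2 / 4 + 2 * gadget_cost H"
  let ?N = "{w. adj v w \<and> w \<noteq> L H \<and> w \<noteq> L 0}"
  note clo = region_lyapunov(1)[OF H]
  have ne: "\<And>u. u \<in> ?R \<Longrightarrow> {w. adj u w} \<noteq> {}" using nbr_nonempty by blast
  have vR: "v \<in> ?R" using v by simp
  have "exp_exit adj v (L H) (L 0) \<le> ennreal (1 + (\<Sum>w\<in>?N. srw_prob adj v w * lyap H w))"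
    by (rule exp_exit_le[OF finite_nbr ne region_lyapunov[OF H] vR])
  also have "(\<Sum>w\<in>?N. srw_prob adj v w * lyap H w) \<le> (\<Sum>w\<in>?N. srw_prob adj v w) * ?bound"
    unfolding sum_distrib_right
  proof (rule sum_mono)
    fix w assume "w \<in> ?N"
    hence "lyap H w \<le> ?bound" using clo[OF vR] lyap_le by blast
    thus "srw_prob adj v w * lyap H w \<le> srw_prob adj v w * ?bound" by (rule mult_left_mono[OF _ srw_prob_nonneg])
  qed
  also have "(\<Sum>w\<in>?N. srw_prob adj v w) * ?bound \<le> 1 * ?bound"
  proof (rule mult_right_mono)
    have "(\<Sum>w\<in>?N. srw_prob adj v w) \<le> (\<Sum>w\<in>{w. adj v w}. srw_prob adj v w)"
      by (rule sum_mono2[OF finite_nbr]) (auto simp: srw_prob_nonneg)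
    also have "\<dots> = 1" by (rule srw_sum_one[where adj = adj, OF finite_nbr nbr_nonempty[OF v(1)]])
    finally show "(\<Sum>w\<in>?N. srw_prob adj v w) \<le> 1" .
    show "0 \<le> ?bound" using gadget_cost_nonneg[of H] by simp
  qed
  finally show ?thesis by (simp add: ennreal_leI)
qed

lemma height_ratio_harmonic:
  assumes k: "1 \<le> k" and u: "is_vertex n u" "u \<noteq> L k" "u \<noteq> L 0"
  shows "srw_prob adj u (L k) +
      (\<Sum>w\<in>{w. adj u w \<and> w \<noteq> L k \<and> w \<noteq> L 0}. srw_prob adj u w * (real (ht h w) / real k)) =
    real (ht h u) / real k"
proof -
  have "(\<Sum>w\<in>{w. adj u w}. srw_prob adj u w * (real (ht h w) / real k)) =
      (\<Sum>w\<in>{w. adj u w}. srw_prob adj u w * real (ht h w)) / real k"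
    by (simp add: sum_divide_distrib)
  also have "\<dots> = real (ht h u) / real k" using harmonic_ht[OF u(1,3)] by simp
  finally show ?thesis
    using srw_split_targets[where adj = adj and v = u and a = "L k" and b = "L 0"
        and F = "\<lambda>w. real (ht h w) / real k", OF finite_nbr] k
    by (simp add: ht_def)
qed

text \<open>Part (1): since the walk below height k is absorbed, the harmonic function ht / k is the
  hitting probability of L k before L 0; from L 0 the first step goes to L 1, of height 1.\<close>

lemma hit_probability:
  assumes k: "1 \<le> k"
  shows "hit_before adj (L 0) (L k) (L 0) = ennreal (1 / real k)"
proof -
  let ?R = "{u. is_vertex n u \<and> ht h u < k}"
  define f where "f u = real (ht h u) / real k" for u
  note clo = region_lyapunov(1)[OF k]
  have harm: "srw_prob adj u (L k) + (\<Sum>w\<in>{w. adj u w \<and> w \<noteq> L k \<and> w \<noteq> L 0}. srw_prob adj u w * f w) = f u"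
    if "u \<in> ?R" "u \<noteq> L k" "u \<noteq> L 0" for u
    using height_ratio_harmonic[OF k] that unfolding f_def by simp
  have "hit_before adj (L 0) (L k) (L 0) =
      ennreal (srw_prob adj (L 0) (L k) + (\<Sum>w\<in>{w. adj (L 0) w \<and> w \<noteq> L k \<and> w \<noteq> L 0}. srw_prob adj (L 0) w * f w))"
    by (rule hit_before_harmonic[OF finite_nbr clo harm _ _ region_absorbed[OF k]])
       (use k in \<open>auto simp: f_def is_vertex_def ht_def\<close>)
  also have "srw_prob adj (L 0) (L k) + (\<Sum>w\<in>{w. adj (L 0) w \<and> w \<noteq> L k \<and> w \<noteq> L 0}. srw_prob adj (L 0) w * f w) = 1 / real k"
  proof (cases "k = 1")
    case True
    hence none: "{w. adj (L 0) w \<and> w \<noteq> L k \<and> w \<noteq> L 0} = {}" using nbr_L0 by auto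
    show ?thesis unfolding none using True nbr_L0 by (simp add: srw_prob_def)
  next
    case False
    hence one: "{w. adj (L 0) w \<and> w \<noteq> L k \<and> w \<noteq> L 0} = {L 1}" using nbr_L0 by auto
    show ?thesis unfolding one using False nbr_L0 by (simp add: srw_prob_def f_def ht_def)
  qed
  finally show ?thesis .
qed

text \<open>The gadgets below h_i cost at most x (5 + 8 * 4^x) with x = n_(i-1) h_(i-1)^2: there are
  i - 1 \<le> h_(i-1) of them, each of cost at most (5 + 8 * 4^n_(i-1)) h_(i-1).\<close>

lemma gadget_cost_bound:
  assumes i: "1 \<le> i" and n0: "0 < n 0" and n_mono: "strict_mono n"
  defines "x \<equiv> n (i - 1) * h (i - 1) ^ 2"
  shows "gadget_cost (h i) \<le> real x * (5 + 8 * 4 ^ x)"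
proof -
  define i' where "i' = i - 1"
  have n1: "1 \<le> n i'" using n0 strict_mono_less_eq[OF n_mono, of 0 i'] by simp
  have h1: "1 \<le> h i'" using h_pos[of i'] by simp
  have nx: "n i' \<le> x" unfolding x_def i'_def[symmetric] using h1 by simp
  have "h i' * h i' \<le> x" unfolding x_def i'_def[symmetric] using n1 by (simp add: power2_eq_square)
  hence hx: "real (h i') * real (h i') \<le> real x" by (metis of_nat_le_iff of_nat_mult)
  have "gadget_cost (h i) \<le> real (card (hubs_below (h i))) * ((5 + 8 * 4 ^ n i') * real (h i'))"
    unfolding gadget_cost_def
  proof (rule sum_bounded_above)
    fix j assume "j \<in> hubs_below (h i)"
    hence "j \<le> i'" unfolding hubs_below_hub i'_def by auto
    hence "n j \<le> n i'" "h j \<le> h i'" using n_mono h_mono by (simp_all add: strict_mono_less_eq)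
    thus "(5 + 8 * 4 ^ n j) * real (h j) \<le> (5 + 8 * 4 ^ n i') * real (h i')"
      by (intro mult_mono add_left_mono mult_left_mono power_increasing) auto
  qed
  also have "card (hubs_below (h i)) = i'" unfolding hubs_below_hub i'_def by simp
  also have "real i' * ((5 + 8 * 4 ^ n i') * real (h i')) \<le> real (h i') * ((5 + 8 * 4 ^ n i') * real (h i'))"
    using h_ge[of i'] by (intro mult_right_mono) auto
  also have "\<dots> = real (h i' * h i') * (5 + 8 * 4 ^ n i')" by simp
  also have "\<dots> \<le> real x * (5 + 8 * 4 ^ x)"
    using hx nx by (intro mult_mono add_left_mono mult_left_mono power_increasing) auto
  finally show ?thesis .
qed

lemma exit_time_bound:
  assumes i: "1 \<le> i" and n0: "0 < n 0" and n_mono: "strict_mono n"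
    and growth: "27 * (n (i - 1) * h (i - 1) ^ 2) * 4 ^ (n (i - 1) * h (i - 1) ^ 2) \<le> h i"
    and v: "is_vertex n v" "ht h v < h i"
  shows "exp_exit adj v (L (h i)) (L 0) \<le> 2 * of_nat (h i) ^ 2"
proof -
  define x where "x = n (i - 1) * h (i - 1) ^ 2"
  define H where "H = real (h i)"
  have "0 < x"
    using n0 strict_mono_less_eq[OF n_mono, of 0 "i - 1"] h_pos[of "i - 1"] by (simp add: x_def)
  hence x1: "1 \<le> real x" by simp
  have "real (27 * x * 4 ^ x) \<le> real (h i)" using growth unfolding x_def by (simp only: of_nat_le_iff)
  hence HP: "27 * (real x * 4 ^ x) \<le> H" unfolding H_def by (simp add: mult.assoc)
  have "real x \<le> real x * 4 ^ x" using x1 by simp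
  moreover have "H \<le> H ^ 2" unfolding H_def using h_pos[of i] by (simp add: power2_eq_square)
  moreover have "gadget_cost (h i) \<le> real x * 5 + 8 * (real x * 4 ^ x)"
    using gadget_cost_bound[OF i n0 n_mono] unfolding x_def[symmetric] by (simp add: algebra_simps)
  ultimately have "1 + (H ^ 2 / 4 + 2 * gadget_cost (h i)) \<le> 2 * H ^ 2"
    using HP x1 by linarith
  hence "ennreal (1 + (H ^ 2 / 4 + 2 * gadget_cost (h i))) \<le> ennreal (2 * H ^ 2)"
    by (rule ennreal_leI)
  also have "ennreal (2 * H ^ 2) = 2 * of_nat (h i) ^ 2"
    unfolding H_def by (simp add: ennreal_of_nat_eq_real_of_nat ennreal_mult ennreal_power)
  finally have bound: "ennreal (1 + (real (h i) ^ 2 / 4 + 2 * gadget_cost (h i))) \<le> 2 * of_nat (h i) ^ 2"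
    unfolding H_def .
  have "1 \<le> h i" using h_pos[of i] by simp
  show ?thesis by (rule order_trans[OF exit_time_estimate[OF \<open>1 \<le> h i\<close> v] bound])
qed

end

theorem proposition4p3:
  fixes \<rho> :: real
  assumes "\<rho> < 1"
  shows "\<exists>F :: nat \<Rightarrow> nat. \<forall>(h :: nat \<Rightarrow> nat) (n :: nat \<Rightarrow> nat)
           (E :: nat \<Rightarrow> nat \<Rightarrow> nat \<Rightarrow> bool) (vv :: nat \<Rightarrow> nat).
     (strict_mono h \<and> strict_mono n \<and> 0 < h 0 \<and> 0 < n 0 \<and>
      (\<forall>i\<ge>1. n i = h i ^ 15 \<and> h i \<ge> F (n (i - 1) * h (i - 1) ^ 2)) \<and>
      (\<forall>i\<ge>1. cubic_expander \<rho> (n i) (E i) \<and> vv i < n i))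
     \<longrightarrow>
     ((\<forall>k::nat. k \<ge> 1 \<longrightarrow>
         hit_before (adjG h n E vv) (L 0) (L k) (L 0) = ennreal (1 / real k)) \<and>
      (\<forall>i\<ge>1. \<forall>v. is_vertex n v \<and> ht h v < h i \<longrightarrow>
         exp_exit (adjG h n E vv) v (L (h i)) (L 0) \<le> 2 * of_nat (h i) ^ 2))"
proof (intro exI[of _ "\<lambda>x. 27 * x * 4 ^ x"] allI impI)
  fix h n :: "nat \<Rightarrow> nat" and E :: "nat \<Rightarrow> nat \<Rightarrow> nat \<Rightarrow> bool" and vv :: "nat \<Rightarrow> nat"
  assume hyps: "strict_mono h \<and> strict_mono n \<and> 0 < h 0 \<and> 0 < n 0 \<and>
      (\<forall>i\<ge>1. n i = h i ^ 15 \<and> h i \<ge> 27 * (n (i - 1) * h (i - 1) ^ 2) * 4 ^ (n (i - 1) * h (i - 1) ^ 2)) \<and>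
      (\<forall>i\<ge>1. cubic_expander \<rho> (n i) (E i) \<and> vv i < n i)"
  interpret G: gadget_graph \<rho> h n E vv
    using assms hyps by unfold_locales auto
  have n_mono: "strict_mono n" and n0: "0 < n 0"
    and growth: "\<And>i. 1 \<le> i \<Longrightarrow> 27 * (n (i - 1) * h (i - 1) ^ 2) * 4 ^ (n (i - 1) * h (i - 1) ^ 2) \<le> h i"
    using hyps by auto
  show "(\<forall>k::nat. k \<ge> 1 \<longrightarrow> hit_before (adjG h n E vv) (L 0) (L k) (L 0) = ennreal (1 / real k)) \<and>
      (\<forall>i\<ge>1. \<forall>v. is_vertex n v \<and> ht h v < h i \<longrightarrow>
         exp_exit (adjG h n E vv) v (L (h i)) (L 0) \<le> 2 * of_nat (h i) ^ 2)"
  proof (intro conjI allI impI)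
    show "hit_before (adjG h n E vv) (L 0) (L k) (L 0) = ennreal (1 / real k)" if "k \<ge> 1" for k
      using that by (rule G.hit_probability)
    show "exp_exit (adjG h n E vv) v (L (h i)) (L 0) \<le> 2 * of_nat (h i) ^ 2"
      if "1 \<le> i" "is_vertex n v \<and> ht h v < h i" for i v
      using that by (intro G.exit_time_bound[OF _ n0 n_mono growth]) auto
  qed
qed

end
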